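(* There is a constant $C>0$, independent of $n$, $f$, $g$ and $x$, such that for all real-valued $f,g\in C^{1}[0,1]$, all $n\ge1$ and all $x\in[0,1]$, $$n\left|B_{n}(fg)(x)-B_{n}(f)(x)B_{n}(g)(x)-\frac{x(1-x)}{n}f'(x)g'(x)\right|\le C\,x(1-x)\Big\{\omega_{3}\big(f';n^{-1/6}\big)\,\omega_{3}\big(g';n^{-1/6}\big)$$ $$+\|f'\|\,\omega_{3}\big(g';n^{-1/6}\big)+\|g'\|\,\omega_{3}\big(f';n^{-1/6}\big)+\max\Big\{\frac{\|f\|}{n^{1/2}},\omega_{3}\big(f';n^{-1/6}\big)\Big\}\cdot\max\Big\{\frac{\|g\|}{n^{1/2}},\omega_{3}\big(g';n^{-1/6}\big)\Big\}\Big\}.$$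
   Context: For $f:[0,1]\to\mathbb{R}$ the Bernstein polynomials are $B_{n}(f)(x)=\sum_{k=0}^{n}\binom{n}{k}x^{k}(1-x)^{n-k}f(k/n)$. $\|\cdot\|$ denotes the uniform norm on $C[0,1]$. For $h\in C[0,1]$ and $\delta>0$, $\omega_{3}(h;\delta)=\sup\{|h(x+3t)-3h(x+2t)+3h(x+t)-h(x)| : 0<t\le\delta,\ x,x+3t\in[0,1]\}$ is the third-order modulus of smoothness. *)

theory Defs
  imports "HOL-Analysis.Analysis"
begin

definition bernstein :: "nat \<Rightarrow> (real \<Rightarrow> real) \<Rightarrow> real \<Rightarrow> real" where
  "bernstein n f x = (\<Sum>k=0..n. real (n choose k) * x ^ k * (1 - x) ^ (n - k) * f (real k / real n))"

definition unorm :: "(real \<Rightarrow> real) \<Rightarrow> real" where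
  "unorm h = (SUP x\<in>{0..1}. \<bar>h x\<bar>)"

definition omega3 :: "(real \<Rightarrow> real) \<Rightarrow> real \<Rightarrow> real" where
  "omega3 h \<delta> = Sup {\<bar>h (x + 3*t) - 3 * h (x + 2*t) + 3 * h (x + t) - h x\<bar> | x t.
      0 < t \<and> t \<le> \<delta> \<and> 0 \<le> x \<and> x + 3*t \<le> 1}"

definition C1_on_unit :: "(real \<Rightarrow> real) \<Rightarrow> (real \<Rightarrow> real) \<Rightarrow> bool" where
  "C1_on_unit f f' \<longleftrightarrow> continuous_on {0..1} f' \<and>
     (\<forall>x\<in>{0..1}. (f has_real_derivative f' x) (at x within {0..1}))"

end

theory Submission
  imports Defs
begin

text \<open>Read \<open>bernstein n g x\<close> as the expectation of \<open>g\<close> under the binomial law on the grid \<open>k/n\<close>; the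
  quantity to estimate is then \<open>n\<close> times the covariance of \<open>f\<close> and \<open>g\<close>. With \<open>\<delta> = n\<^sup>-\<^sup>1\<^sup>/\<^sup>6\<close>, so that
  \<open>\<delta>\<^sup>-\<^sup>3 = \<surd>n\<close>, the derivative \<open>f'\<close> has a quadratic approximation around \<open>x\<close> with error
  \<open>\<omega>\<^sub>3(f'; \<delta>) (1 + |y - x|\<^sup>3 / \<delta>\<^sup>3)\<close> (constructed from Steklov means); integrating it writes \<open>f\<close> as a cubic
  in \<open>y - x\<close> plus a remainder of size \<open>\<omega>\<^sub>3(f'; \<delta>) (|y - x| + \<surd>n (y - x)\<^sup>4)\<close>, and the coefficients of the cubic
  are controlled by \<open>\<parallel>f\<parallel> + \<omega>\<^sub>3(f'; \<delta>) \<surd>n\<close> through interpolation. Expanding the covariance bilinearly, the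
  product of the linear terms gives exactly \<open>x(1 - x)/n \<cdot> f'(x) g'(x)\<close>, and every other term is bounded by
  the central moments of order at most \<open>4\<close> of the binomial law, each of which carries the factor \<open>x(1 - x)/n\<close>.\<close>

section \<open>Moments of Bernstein polynomials\<close>

lemma sum_mult_Bernstein_Suc:
  "(\<Sum>k\<le>Suc m. real k * g k * Bernstein (Suc m) k x) =
     real (Suc m) * x * (\<Sum>k\<le>m. g (Suc k) * Bernstein m k x)"
proof -
  have "(\<Sum>k\<le>Suc m. real k * g k * Bernstein (Suc m) k x) =
        (\<Sum>k\<le>m. real (Suc k) * g (Suc k) * Bernstein (Suc m) (Suc k) x)"
    by (simp only: sum.atMost_Suc_shift)
  also have "\<dots> = (\<Sum>k\<le>m. real (Suc m) * x * (g (Suc k) * Bernstein m k x))"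
  proof (rule sum.cong[OF refl])
    fix k
    have e: "real (Suc k) * real (Suc m choose Suc k) = real (Suc m) * real (m choose k)"
      by (simp only: of_nat_mult[symmetric] Suc_times_binomial)
    have "real (Suc k) * g (Suc k) * Bernstein (Suc m) (Suc k) x
        = (real (Suc k) * real (Suc m choose Suc k)) * g (Suc k) * x ^ Suc k * (1-x)^(m-k)"
      by (simp add: Bernstein_def)
    also have "\<dots> = real (Suc m) * x * (g (Suc k) * Bernstein m k x)"
      unfolding e by (simp add: Bernstein_def)
    finally show "real (Suc k) * g (Suc k) * Bernstein (Suc m) (Suc k) x
      = real (Suc m) * x * (g (Suc k) * Bernstein m k x)" .
  qed
  also have "\<dots> = real (Suc m) * x * (\<Sum>k\<le>m. g (Suc k) * Bernstein m k x)"
    by (simp add: sum_distrib_left)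
  finally show ?thesis .
qed

lemma sum_kkk_Bernstein:
  "(\<Sum>k\<le>n. real k * ((real k - 1) * (real k - 2)) * Bernstein n k x) =
   real n * (real n - 1) * (real n - 2) * x^3"
proof (cases n)
  case (Suc m)
  have "(\<Sum>k\<le>n. real k * ((real k - 1) * (real k - 2)) * Bernstein n k x)
     = real n * x * (\<Sum>k\<le>m. ((real (Suc k) - 1) * (real (Suc k) - 2)) * Bernstein m k x)"
    unfolding Suc by (rule sum_mult_Bernstein_Suc)
  also have "(\<Sum>k\<le>m. ((real (Suc k) - 1) * (real (Suc k) - 2)) * Bernstein m k x)
     = (\<Sum>k\<le>m. real k * (real k - 1) * Bernstein m k x)"
    by (rule sum.cong) (auto simp: algebra_simps)
  also have "\<dots> = real m * (real m - 1) * x^2" by simp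
  finally show ?thesis unfolding Suc by (simp add: algebra_simps power3_eq_cube power2_eq_square)
qed simp

lemma sum_kkkk_Bernstein:
  "(\<Sum>k\<le>n. real k * ((real k - 1) * (real k - 2) * (real k - 3)) * Bernstein n k x) =
   real n * (real n - 1) * (real n - 2) * (real n - 3) * x^4"
proof (cases n)
  case (Suc m)
  have "(\<Sum>k\<le>n. real k * ((real k - 1) * (real k - 2) * (real k - 3)) * Bernstein n k x)
     = real n * x * (\<Sum>k\<le>m. ((real (Suc k) - 1) * (real (Suc k) - 2) * (real (Suc k) - 3))
         * Bernstein m k x)"
    unfolding Suc by (rule sum_mult_Bernstein_Suc)
  also have "(\<Sum>k\<le>m. ((real (Suc k) - 1) * (real (Suc k) - 2) * (real (Suc k) - 3)) * Bernstein m k x)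
     = (\<Sum>k\<le>m. real k * ((real k - 1) * (real k - 2)) * Bernstein m k x)"
    by (rule sum.cong) (auto simp: algebra_simps)
  also have "\<dots> = real m * (real m - 1) * (real m - 2) * x^3" by (rule sum_kkk_Bernstein)
  finally show ?thesis
    unfolding Suc by (simp add: algebra_simps power3_eq_cube power2_eq_square power4_eq_xxxx)
qed simp

lemma sum_central2_Bernstein:
  "(\<Sum>k\<le>n. (real k - real n * x)^2 * Bernstein n k x) = real n * x * (1 - x)"
proof -
  have p: "(real k - real n * x)^2 * Bernstein n k x = real k * (real k - 1) * Bernstein n k x
      + (1 - 2 * (real n * x)) * (real k * Bernstein n k x) + (real n * x)^2 * Bernstein n k x" for k
    by (simp add: algebra_simps power2_eq_square)
  show ?thesis
    unfolding p sum.distrib sum_distrib_left[symmetric] sum_k_Bernstein sum_kk_Bernstein sum_Bernstein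
    by (simp add: algebra_simps power2_eq_square)
qed

lemma sum_central3_Bernstein:
  "(\<Sum>k\<le>n. (real k - real n * x)^3 * Bernstein n k x) = real n * x * (1 - x) * (1 - 2*x)"
proof -
  have p: "(real k - real n * x)^3 * Bernstein n k x
      = real k * ((real k - 1) * (real k - 2)) * Bernstein n k x
      + (3 - 3 * (real n * x)) * (real k * (real k - 1) * Bernstein n k x)
      + (1 - 3 * (real n * x) + 3 * (real n * x)^2) * (real k * Bernstein n k x)
      - (real n * x)^3 * Bernstein n k x" for k
    by (simp add: algebra_simps power2_eq_square power3_eq_cube)
  show ?thesis
    unfolding p sum.distrib sum_subtractf sum_distrib_left[symmetric]
      sum_k_Bernstein sum_kk_Bernstein sum_kkk_Bernstein sum_Bernstein
    by (simp add: algebra_simps power2_eq_square power3_eq_cube)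
qed

lemma sum_central4_Bernstein:
  "(\<Sum>k\<le>n. (real k - real n * x)^4 * Bernstein n k x) =
     real n * x * (1 - x) * (1 + 3 * (real n - 2) * x * (1 - x))"
proof -
  have p: "(real k - real n * x)^4 * Bernstein n k x
      = real k * ((real k - 1) * (real k - 2) * (real k - 3)) * Bernstein n k x
      + (6 - 4 * (real n * x)) * (real k * ((real k - 1) * (real k - 2)) * Bernstein n k x)
      + (7 - 12 * (real n * x) + 6 * (real n * x)^2) * (real k * (real k - 1) * Bernstein n k x)
      + (1 - 4 * (real n * x) + 6 * (real n * x)^2 - 4 * (real n * x)^3) * (real k * Bernstein n k x)
      + (real n * x)^4 * Bernstein n k x" for k
    by (simp add: algebra_simps power2_eq_square power3_eq_cube power4_eq_xxxx)
  show ?thesis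
    unfolding p sum.distrib sum_distrib_left[symmetric]
      sum_k_Bernstein sum_kk_Bernstein sum_kkk_Bernstein sum_kkkk_Bernstein sum_Bernstein
    by (simp add: algebra_simps power2_eq_square power3_eq_cube power4_eq_xxxx)
qed

section \<open>Bernstein operators as expectations and covariances\<close>

lemma bernstein_altdef: "bernstein n g x = (\<Sum>k\<le>n. Bernstein n k x * g (real k / real n))"
  unfolding bernstein_def Bernstein_def atLeast0AtMost
  by (rule sum.cong) (auto simp: algebra_simps)

lemma bernstein_add: "bernstein n (\<lambda>y. f y + g y) x = bernstein n f x + bernstein n g x"
  unfolding bernstein_altdef by (simp add: algebra_simps sum.distrib)

lemma bernstein_cmult: "bernstein n (\<lambda>y. c * f y) x = c * bernstein n f x"
  unfolding bernstein_altdef by (simp add: algebra_simps sum_distrib_left)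

lemma bernstein_eq_cmult:
  assumes "\<And>y. f y = c * g y"
  shows "bernstein n f x = c * bernstein n g x"
proof -
  have "f = (\<lambda>y. c * g y)" using assms by auto
  then show ?thesis by (simp add: bernstein_cmult)
qed

lemma bernstein_const: "bernstein n (\<lambda>y. c) x = c"
  unfolding bernstein_altdef by (simp add: sum_distrib_right[symmetric])

lemma grid_point_in_unit: "k \<le> n \<Longrightarrow> 1 \<le> n \<Longrightarrow> real k / real n \<in> {0..1}"
  by (auto simp: field_simps)

lemma bernstein_mono:
  assumes "1 \<le> n" "x \<in> {0..1}" "\<And>y. y \<in> {0..1} \<Longrightarrow> f y \<le> g y"
  shows "bernstein n f x \<le> bernstein n g x"
  unfolding bernstein_altdef
  by (rule sum_mono) (use assms grid_point_in_unit Bernstein_nonneg in \<open>auto intro!: mult_left_mono\<close>)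

lemma bernstein_cong:
  assumes "1 \<le> n" "\<And>y. y \<in> {0..1} \<Longrightarrow> f y = g y"
  shows "bernstein n f x = bernstein n g x"
  unfolding bernstein_altdef by (rule sum.cong) (use assms grid_point_in_unit in auto)

lemma abs_bernstein_le:
  assumes "x \<in> {0..1}"
  shows "\<bar>bernstein n f x\<bar> \<le> bernstein n (\<lambda>y. \<bar>f y\<bar>) x"
  unfolding bernstein_altdef
  by (rule order_trans[OF sum_abs]) (use assms Bernstein_nonneg in \<open>auto simp: abs_mult\<close>)

lemma bernstein_nonneg:
  assumes "1 \<le> n" "x \<in> {0..1}" "\<And>y. y \<in> {0..1} \<Longrightarrow> 0 \<le> f y"
  shows "0 \<le> bernstein n f x"
  using bernstein_mono[OF assms(1,2), of "\<lambda>y. 0" f] assms(3) by (simp add: bernstein_const)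

lemma bernstein_central_moment:
  assumes "1 \<le> n"
  shows "bernstein n (\<lambda>y. (y - x)^m) x = (\<Sum>k\<le>n. (real k - real n * x)^m * Bernstein n k x) / real n ^ m"
proof -
  have "(real k / real n - x)^m = (real k - real n * x)^m / real n ^ m" for k
    using assms by (simp add: power_divide[symmetric] diff_divide_distrib)
  then show ?thesis unfolding bernstein_altdef sum_divide_distrib
    by (intro sum.cong) (auto simp: algebra_simps)
qed

lemma bernstein_central_moment1: "1 \<le> n \<Longrightarrow> bernstein n (\<lambda>y. y - x) x = 0"
  using bernstein_central_moment[of n x 1]
  by (simp add: algebra_simps sum_subtractf sum_distrib_left[symmetric])

lemma bernstein_central_moment2: "1 \<le> n \<Longrightarrow> bernstein n (\<lambda>y. (y - x)^2) x = x * (1 - x) / n"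
  by (subst bernstein_central_moment, assumption, subst sum_central2_Bernstein)
    (simp add: field_simps power2_eq_square)

lemma bernstein_central_moment3:
  "1 \<le> n \<Longrightarrow> bernstein n (\<lambda>y. (y - x)^3) x = x * (1 - x) / n * (1 - 2*x) / n"
  by (subst bernstein_central_moment, assumption, subst sum_central3_Bernstein)
    (simp add: field_simps power3_eq_cube)

lemma bernstein_central_moment4:
  "1 \<le> n \<Longrightarrow>
    bernstein n (\<lambda>y. (y - x)^4) x = x * (1 - x) / n * (1 + 3 * (real n - 2) * x * (1 - x)) / n^2"
  by (subst bernstein_central_moment, assumption, subst sum_central4_Bernstein)
    (simp add: field_simps power4_eq_xxxx power2_eq_square)

definition bernstein_cov :: "nat \<Rightarrow> real \<Rightarrow> (real \<Rightarrow> real) \<Rightarrow> (real \<Rightarrow> real) \<Rightarrow> real" where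
  "bernstein_cov n x a b = bernstein n (\<lambda>y. a y * b y) x - bernstein n a x * bernstein n b x"

lemma bernstein_cov_add_left:
  "bernstein_cov n x (\<lambda>y. a y + b y) c = bernstein_cov n x a c + bernstein_cov n x b c"
  unfolding bernstein_cov_def by (simp add: distrib_right bernstein_add algebra_simps)

lemma bernstein_cov_add_right:
  "bernstein_cov n x c (\<lambda>y. a y + b y) = bernstein_cov n x c a + bernstein_cov n x c b"
  unfolding bernstein_cov_def by (simp add: distrib_left bernstein_add algebra_simps)

lemma bernstein_cov_cmult_left: "bernstein_cov n x (\<lambda>y. k * a y) c = k * bernstein_cov n x a c"
  unfolding bernstein_cov_def by (simp add: mult.assoc bernstein_cmult algebra_simps)

lemma bernstein_cov_commute: "bernstein_cov n x a b = bernstein_cov n x b a"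
  unfolding bernstein_cov_def by (simp add: mult.commute)

lemma bernstein_cov_cmult_right: "bernstein_cov n x c (\<lambda>y. k * a y) = k * bernstein_cov n x c a"
  by (simp add: bernstein_cov_commute[of n x c] bernstein_cov_cmult_left)

lemma bernstein_cov_const_left: "bernstein_cov n x (\<lambda>y. k) c = 0"
  unfolding bernstein_cov_def by (simp add: bernstein_cmult bernstein_const)

lemma bernstein_cov_const_right: "bernstein_cov n x c (\<lambda>y. k) = 0"
  by (simp add: bernstein_cov_commute[of n x c] bernstein_cov_const_left)

lemma bernstein_cov_cong:
  assumes "1 \<le> n" "\<And>y. y \<in> {0..1} \<Longrightarrow> a y = a' y" "\<And>y. y \<in> {0..1} \<Longrightarrow> b y = b' y"
  shows "bernstein_cov n x a b = bernstein_cov n x a' b'"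
proof -
  have "bernstein n (\<lambda>y. a y * b y) x = bernstein n (\<lambda>y. a' y * b' y) x"
    "bernstein n a x = bernstein n a' x" "bernstein n b x = bernstein n b' x"
    by (rule bernstein_cong; use assms in simp)+
  then show ?thesis unfolding bernstein_cov_def by simp
qed

lemma abs_bernstein_cov_le:
  assumes n: "1 \<le> n" and x: "x \<in> {0..1}"
    and a: "\<And>y. y \<in> {0..1} \<Longrightarrow> \<bar>a y\<bar> \<le> \<alpha> y"
    and b: "\<And>y. y \<in> {0..1} \<Longrightarrow> \<bar>b y\<bar> \<le> \<beta> y"
  shows "\<bar>bernstein_cov n x a b\<bar>
    \<le> bernstein n (\<lambda>y. \<alpha> y * \<beta> y) x + bernstein n \<alpha> x * bernstein n \<beta> x"
proof -
  have abs_le: "\<bar>bernstein n u x\<bar> \<le> bernstein n v x" if "\<And>y. y \<in> {0..1} \<Longrightarrow> \<bar>u y\<bar> \<le> v y" for u v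
    using abs_bernstein_le[OF x, of n u] bernstein_mono[OF n x, of "\<lambda>y. \<bar>u y\<bar>" v] that
    by fastforce
  have "\<bar>bernstein n (\<lambda>y. a y * b y) x\<bar> \<le> bernstein n (\<lambda>y. \<alpha> y * \<beta> y) x"
  proof (rule abs_le)
    fix y :: real assume "y \<in> {0..1}"
    then show "\<bar>a y * b y\<bar> \<le> \<alpha> y * \<beta> y"
      using a[of y] b[of y] by (auto simp: abs_mult intro!: mult_mono)
  qed
  moreover have "\<bar>bernstein n a x * bernstein n b x\<bar> \<le> bernstein n \<alpha> x * bernstein n \<beta> x"
    unfolding abs_mult using abs_le[of a \<alpha>] abs_le[of b \<beta>] a b by (intro mult_mono) auto
  ultimately show ?thesis unfolding bernstein_cov_def by linarith
qed

section \<open>Covariance estimates at a fixed point\<close>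

lemma mult_one_minus_le_quarter: "(x::real) * (1 - x) \<le> 1/4"
proof -
  have "0 \<le> (x - 1/2)^2" by simp
  then show ?thesis by (simp add: power2_eq_square algebra_simps)
qed

locale bernstein_point =
  fixes n :: nat and x :: real
  assumes n_ge1: "1 \<le> n" and x_ge0: "0 \<le> x" and x_le1: "x \<le> 1"
begin

abbreviation E :: "(real \<Rightarrow> real) \<Rightarrow> real" where "E f \<equiv> bernstein n f x"

abbreviation cov :: "(real \<Rightarrow> real) \<Rightarrow> (real \<Rightarrow> real) \<Rightarrow> real" where
  "cov \<equiv> bernstein_cov n x"

definition var :: real where "var = x * (1 - x) / n"

definition r :: real where "r = sqrt (real n)"

lemma x_in_unit: "x \<in> {0..1}" using x_ge0 x_le1 by simp
lemma n_pos: "0 < real n" using n_ge1 by simp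
lemma r_ge1: "1 \<le> r" using n_ge1 by (simp add: r_def)
lemma r_pos: "0 < r" using r_ge1 by simp
lemma r_times_r: "r * r = real n" by (simp add: r_def)

lemma r_le_n: "r \<le> real n"
  using mult_left_mono[OF r_ge1, of r] r_pos r_times_r by simp

lemma var_nonneg: "0 \<le> var" using x_ge0 x_le1 n_pos by (simp add: var_def)

lemma var_le: "var \<le> 1 / (4 * n)"
  using divide_right_mono[OF mult_one_minus_le_quarter[of x], of n] n_pos by (simp add: var_def)

lemma var_le_quarter: "var \<le> 1/4"
proof -
  have "1 / (4 * real n) \<le> 1/4" using n_ge1 by (simp add: field_simps)
  then show ?thesis using var_le by linarith
qed

lemma var_div_n_le: "var / real n \<le> var"
proof -
  have "1 * var \<le> real n * var" using n_ge1 var_nonneg by (intro mult_right_mono) auto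
  then show ?thesis using n_pos by (simp add: divide_le_eq mult.commute)
qed

lemma abs_dev_le1: "y \<in> {0..1} \<Longrightarrow> \<bar>y - x\<bar> \<le> 1" using x_ge0 x_le1 by auto

lemma moment1: "E (\<lambda>y. y - x) = 0"
  using bernstein_central_moment1 n_ge1 by simp

lemma moment2: "E (\<lambda>y. (y - x)^2) = var"
  using bernstein_central_moment2 n_ge1 by (simp add: var_def)

lemma abs_moment3_le: "\<bar>E (\<lambda>y. (y - x)^3)\<bar> \<le> var / n"
proof -
  have "\<bar>1 - 2*x\<bar> \<le> 1" using x_ge0 x_le1 by auto
  then have "\<bar>var * (1 - 2*x) / n\<bar> \<le> var / n" using var_nonneg n_pos
    by (simp add: abs_mult divide_right_mono mult_left_le)
  then show ?thesis using bernstein_central_moment3 n_ge1 by (simp add: var_def)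
qed

lemma moment4_le: "E (\<lambda>y. (y - x)^4) \<le> 2 * var / n"
proof -
  have "1 + 3 * (real n - 2) * x * (1 - x) \<le> 2 * real n"
  proof (cases "real n \<ge> 2")
    case True
    have "3 * (real n - 2) * (x * (1 - x)) \<le> 3 * (real n - 2) * (1/4)"
      using mult_one_minus_le_quarter True by (intro mult_left_mono) auto
    then show ?thesis using True by (simp add: algebra_simps)
  next
    case False
    have "3 * (real n - 2) * (x * (1 - x)) \<le> 0"
      using False x_ge0 x_le1 by (simp add: mult_nonpos_nonneg)
    then show ?thesis using n_ge1 by (simp add: algebra_simps)
  qed
  then have "var * (1 + 3 * (real n - 2) * x * (1 - x)) / n^2 \<le> var * (2 * real n) / n^2"
    using var_nonneg by (intro divide_right_mono mult_left_mono) auto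
  also have "\<dots> = 2 * var / n" using n_pos by (simp add: power2_eq_square field_simps)
  finally show ?thesis using bernstein_central_moment4 n_ge1 by (simp add: var_def)
qed

lemma moment4_nonneg: "0 \<le> E (\<lambda>y. (y - x)^4)"
  by (rule bernstein_nonneg[OF n_ge1 x_in_unit]) simp

lemma abs_dev_mean_nonneg: "0 \<le> E (\<lambda>y. \<bar>y - x\<bar>)"
  by (rule bernstein_nonneg[OF n_ge1 x_in_unit]) simp

lemma abs_dev_mean_sq_le: "(E (\<lambda>y. \<bar>y - x\<bar>))^2 \<le> var"
proof -
  define c where "c = E (\<lambda>y. \<bar>y - x\<bar>)"
  have "0 \<le> E (\<lambda>y. (\<bar>y - x\<bar> - c)^2)"
    by (rule bernstein_nonneg[OF n_ge1 x_in_unit]) simp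
  also have "E (\<lambda>y. (\<bar>y - x\<bar> - c)^2) = E (\<lambda>y. (y - x)^2 + ((-2*c) * \<bar>y - x\<bar> + c^2))"
    by (simp add: power2_eq_square algebra_simps)
  also have "\<dots> = var - c^2"
    unfolding bernstein_add bernstein_cmult bernstein_const moment2 c_def[symmetric]
    by (simp add: power2_eq_square)
  finally show ?thesis unfolding c_def by simp
qed

lemma abs_dev_mean_le: "E (\<lambda>y. \<bar>y - x\<bar>) \<le> 1 / (2 * r)"
proof -
  have "(1 / (2 * r))^2 = 1 / (4 * real n)" using r_times_r by (simp add: power2_eq_square)
  then have "(E (\<lambda>y. \<bar>y - x\<bar>))^2 \<le> (1 / (2 * r))^2"
    using abs_dev_mean_sq_le var_le by linarith
  then show ?thesis using abs_dev_mean_nonneg r_pos by (simp add: power2_le_iff_abs_le)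
qed

text \<open>If \<open>f'\<close> has third modulus \<open>\<omega>\<close> at step \<open>\<delta>\<close> with \<open>\<delta>\<^sup>3 = 1/r\<close>, then \<open>f\<close> differs from a cubic
  by at most a multiple of \<open>\<omega> \<cdot> weight\<close>.\<close>

definition weight :: "real \<Rightarrow> real" where "weight y = \<bar>y - x\<bar> + r * (y - x)^4"

lemma weight_nonneg: "0 \<le> weight y" using r_pos by (simp add: weight_def)

lemma weight_le: "y \<in> {0..1} \<Longrightarrow> weight y \<le> 2 * r"
proof -
  assume y: "y \<in> {0..1}"
  have "(y - x)^4 = \<bar>y - x\<bar>^4" by (simp add: power_even_abs)
  also have "\<dots> \<le> 1" using abs_dev_le1[OF y] by (intro power_le_one) auto
  finally have "r * (y - x)^4 \<le> r * 1" using r_pos by (intro mult_left_mono) auto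
  then show ?thesis using abs_dev_le1[OF y] r_ge1 unfolding weight_def by linarith
qed

lemma r_moment4_le: "r * E (\<lambda>y. (y - x)^4) \<le> 2 * var / r"
proof -
  have "r * E (\<lambda>y. (y - x)^4) \<le> r * (2 * var / real n)"
    using moment4_le r_pos by (intro mult_left_mono) auto
  also have "\<dots> = 2 * var / r" unfolding r_times_r[symmetric] using r_pos by (simp add: field_simps)
  finally show ?thesis .
qed

lemma mean_weight_le: "E weight \<le> E (\<lambda>y. \<bar>y - x\<bar>) + 2 * var / r"
  using r_moment4_le unfolding weight_def by (simp add: bernstein_add bernstein_cmult)

lemma mean_weight_le_inverse: "E weight \<le> 1 / r"
proof -
  have "2 * var / r \<le> 1 / (2 * r)"
    using var_le_quarter r_pos by (simp add: divide_right_mono field_simps)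
  moreover have "1 / (2 * r) + 1 / (2 * r) = 1 / r" using r_pos by (simp add: field_simps)
  ultimately show ?thesis using mean_weight_le abs_dev_mean_le by linarith
qed

lemma mean_weight_sq_le: "(E weight)^2 \<le> 4 * var"
proof -
  define e where "e = E (\<lambda>y. \<bar>y - x\<bar>)"
  define v where "v = 2 * var / r"
  have "0 \<le> E weight" by (rule bernstein_nonneg[OF n_ge1 x_in_unit]) (simp add: weight_nonneg)
  then have "(E weight)^2 \<le> (e + v)^2"
    using mean_weight_le unfolding e_def v_def by (intro power_mono) auto
  also have "\<dots> \<le> 2 * e^2 + 2 * v^2"
    using zero_le_power2[of "e - v"] by (simp add: power2_eq_square algebra_simps)
  also have "v^2 = 4 * var * (var / real n)"
    using r_times_r r_pos by (simp add: v_def power2_eq_square field_simps)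
  also have "var / real n \<le> 1/4" using var_div_n_le var_le_quarter by linarith
  then have "4 * var * (var / real n) \<le> 4 * var * (1/4)"
    by (rule mult_left_mono) (use var_nonneg in simp)
  also have "2 * e^2 + 2 * (4 * var * (1/4)) \<le> 2 * var + 2 * (4 * var * (1/4))"
    using abs_dev_mean_sq_le unfolding e_def by simp
  finally show ?thesis by simp
qed

lemma mean_abs_dev_mult_weight_le: "E (\<lambda>y. \<bar>y - x\<bar> * weight y) \<le> 3 * var"
proof -
  have "\<bar>y - x\<bar> * weight y \<le> (y - x)^2 + r * (y - x)^4" if "y \<in> {0..1}" for y
  proof -
    define t where "t = \<bar>y - x\<bar>"
    have "0 \<le> t" "t \<le> 1" using abs_dev_le1[OF that] by (auto simp: t_def)
    then have "t^5 \<le> t^4" by (simp add: power_decreasing)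
    then have "r * t^5 \<le> r * t^4" using r_pos by (intro mult_left_mono) auto
    moreover have "t * (t + r * t^4) = t^2 + r * t^5"
      by (simp add: algebra_simps power2_eq_square eval_nat_numeral)
    ultimately have "t * (t + r * t^4) \<le> t^2 + r * t^4" by linarith
    then show ?thesis by (simp add: weight_def t_def power_even_abs)
  qed
  then have "E (\<lambda>y. \<bar>y - x\<bar> * weight y) \<le> E (\<lambda>y. (y - x)^2 + r * (y - x)^4)"
    by (rule bernstein_mono[OF n_ge1 x_in_unit])
  also have "\<dots> = var + r * E (\<lambda>y. (y - x)^4)" by (simp add: bernstein_add bernstein_cmult moment2)
  finally have "E (\<lambda>y. \<bar>y - x\<bar> * weight y) \<le> var + r * E (\<lambda>y. (y - x)^4)" .
  moreover have "2 * var / r \<le> 2 * var"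
  proof -
    have "1 * (2 * var) \<le> r * (2 * var)" using r_ge1 var_nonneg by (intro mult_right_mono) auto
    then show ?thesis using r_pos by (simp add: divide_le_eq mult.commute)
  qed
  ultimately show ?thesis using r_moment4_le by linarith
qed

lemma mean_sq_dev_mult_weight_le: "E (\<lambda>y. (y - x)^2 * weight y) \<le> 7/2 * var / r"
proof -
  have "(y - x)^2 * weight y \<le> 1 / (2 * r) * (y - x)^2 + 3/2 * (r * (y - x)^4)" if "y \<in> {0..1}" for y
  proof -
    define t where "t = \<bar>y - x\<bar>"
    have "0 \<le> t" "t \<le> 1" using abs_dev_le1[OF that] by (auto simp: t_def)
    then have "t^6 \<le> t^4" by (simp add: power_decreasing)
    then have a: "r * t^6 \<le> r * t^4" using r_pos by simp
    \<comment> \<open>AM-GM: \<open>t\<^sup>3 \<le> t\<^sup>2/(2r) + r t\<^sup>4/2\<close>\<close>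
    have "0 \<le> t^2 * (1 - r * t)^2 / r" using r_pos by simp
    moreover have "t^2 * (1 - r * t)^2 / r = t^2 / r - 2 * t^3 + r * t^4"
      using r_pos by (simp add: field_simps power2_eq_square eval_nat_numeral)
    ultimately have "t^3 \<le> 1 / (2 * r) * t^2 + 1/2 * r * t^4" by (simp add: field_simps)
    then have "t^2 * (t + r * t^4) \<le> 1 / (2 * r) * t^2 + 3/2 * (r * t^4)"
      using a by (simp add: algebra_simps eval_nat_numeral)
    then show ?thesis by (simp add: weight_def t_def power_even_abs)
  qed
  then have "E (\<lambda>y. (y - x)^2 * weight y)
      \<le> E (\<lambda>y. 1 / (2 * r) * (y - x)^2 + 3/2 * (r * (y - x)^4))"
    by (rule bernstein_mono[OF n_ge1 x_in_unit])
  also have "\<dots> = 1 / (2 * r) * var + 3/2 * (r * E (\<lambda>y. (y - x)^4))"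
    unfolding bernstein_add bernstein_cmult moment2 ..
  finally have "E (\<lambda>y. (y - x)^2 * weight y) \<le> 1 / (2 * r) * var + 3/2 * (r * E (\<lambda>y. (y - x)^4))" .
  moreover have "1 / (2 * r) * var + 3/2 * (2 * var / r) = 7/2 * var / r"
    using r_pos by (simp add: field_simps)
  ultimately show ?thesis using r_moment4_le by linarith
qed

lemma mean_weight_mult_weight_le: "E (\<lambda>y. weight y * weight y) \<le> 7 * var"
proof -
  have "weight y * weight y \<le> (y - x)^2 + (2 * r + real n) * (y - x)^4" if "y \<in> {0..1}" for y
  proof -
    define t where "t = \<bar>y - x\<bar>"
    have "0 \<le> t" "t \<le> 1" using abs_dev_le1[OF that] by (auto simp: t_def)
    then have "t^5 \<le> t^4" "t^8 \<le> t^4" by (simp_all add: power_decreasing)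
    then have "2 * r * t^5 \<le> 2 * r * t^4" "real n * t^8 \<le> real n * t^4"
      using r_pos by (auto intro!: mult_left_mono)
    moreover have "(t + r * t^4) * (t + r * t^4) = t^2 + 2 * r * t^5 + (r * r) * t^8"
      by (simp add: algebra_simps eval_nat_numeral)
    ultimately have "(t + r * t^4) * (t + r * t^4) \<le> t^2 + (2 * r + real n) * t^4"
      using r_times_r by (simp add: algebra_simps)
    then show ?thesis by (simp add: weight_def t_def power_even_abs)
  qed
  then have "E (\<lambda>y. weight y * weight y) \<le> E (\<lambda>y. (y - x)^2 + (2 * r + real n) * (y - x)^4)"
    by (rule bernstein_mono[OF n_ge1 x_in_unit])
  also have "\<dots> = var + (2 * r + real n) * E (\<lambda>y. (y - x)^4)"
    by (simp add: bernstein_add bernstein_cmult moment2)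
  finally have "E (\<lambda>y. weight y * weight y) \<le> var + (2 * r + real n) * E (\<lambda>y. (y - x)^4)" .
  moreover have "(2 * r + real n) * E (\<lambda>y. (y - x)^4) \<le> (2 * r + real n) * (2 * var / real n)"
    using moment4_le r_pos by (intro mult_left_mono) auto
  moreover have "(2 * r + real n) * (2 * var / real n) \<le> 3 * (2 * var)"
  proof -
    have "2 * r / real n \<le> 2" using r_le_n n_pos by (simp add: divide_le_eq)
    then have "(2 * r / real n + 1) * (2 * var) \<le> 3 * (2 * var)"
      using var_nonneg by (intro mult_right_mono) auto
    then show ?thesis using n_pos by (simp add: field_simps)
  qed
  ultimately show ?thesis by linarith
qed

lemma abs_cov_dev_weighted_le:
  assumes B: "0 \<le> B" and \<psi>: "\<And>y. y \<in> {0..1} \<Longrightarrow> \<bar>\<psi> y\<bar> \<le> B * weight y"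
  shows "\<bar>cov (\<lambda>y. y - x) \<psi>\<bar> \<le> 5 * B * var"
proof -
  define e where "e = E (\<lambda>y. \<bar>y - x\<bar>)"
  have "e * E weight \<le> 2 * var"
  proof -
    have "e * E weight \<le> e * (e + 2 * var / r)"
      using mean_weight_le abs_dev_mean_nonneg unfolding e_def by (intro mult_left_mono) auto
    also have "\<dots> = e^2 + e * (2 * var / r)" by (simp add: power2_eq_square algebra_simps)
    also have "e * (2 * var / r) \<le> 1 / (2 * r) * (2 * var / r)"
      using abs_dev_mean_le var_nonneg r_pos unfolding e_def by (intro mult_right_mono) auto
    also have "1 / (2 * r) * (2 * var / r) = var / real n"
      unfolding r_times_r[symmetric] using r_pos by (simp add: field_simps)
    finally show ?thesis using abs_dev_mean_sq_le var_div_n_le unfolding e_def by linarith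
  qed
  have "\<bar>cov (\<lambda>y. y - x) \<psi>\<bar> \<le> E (\<lambda>y. \<bar>y - x\<bar> * (B * weight y)) + e * E (\<lambda>y. B * weight y)"
    unfolding e_def by (rule abs_bernstein_cov_le[OF n_ge1 x_in_unit]) (auto intro: \<psi>)
  also have "\<dots> = B * E (\<lambda>y. \<bar>y - x\<bar> * weight y) + B * (e * E weight)"
    by (simp add: bernstein_eq_cmult[of _ B] bernstein_cmult)
  also have "\<dots> \<le> B * (3 * var) + B * (2 * var)"
    using mean_abs_dev_mult_weight_le \<open>e * E weight \<le> 2 * var\<close> B by (intro add_mono mult_left_mono)
  finally show ?thesis by (simp add: algebra_simps)
qed

lemma abs_cov_quadratic_weighted_le:
  assumes B: "0 \<le> B" and M: "0 \<le> M"
    and \<psi>: "\<And>y. y \<in> {0..1} \<Longrightarrow> \<bar>\<psi> y\<bar> \<le> B * weight y"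
    and R: "\<And>y. y \<in> {0..1} \<Longrightarrow> \<bar>R y\<bar> \<le> 2 * M * (y - x)^2"
  shows "\<bar>cov R \<psi>\<bar> \<le> 9 * M * B * var / r"
proof -
  have "\<bar>cov R \<psi>\<bar>
      \<le> E (\<lambda>y. 2 * M * (y - x)^2 * (B * weight y)) + E (\<lambda>y. 2 * M * (y - x)^2) * E (\<lambda>y. B * weight y)"
    by (rule abs_bernstein_cov_le[OF n_ge1 x_in_unit]) (auto intro: \<psi> R)
  also have "\<dots> = (2 * M * B) * E (\<lambda>y. (y - x)^2 * weight y) + (2 * M * B * var) * E weight"
    by (simp add: bernstein_eq_cmult[of _ "2 * M * B"] bernstein_cmult moment2)
  also have "(2 * M * B) * E (\<lambda>y. (y - x)^2 * weight y) + (2 * M * B * var) * E weight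
      \<le> (2 * M * B) * (7/2 * var / r) + (2 * M * B * var) * (1 / r)"
    using mean_sq_dev_mult_weight_le mean_weight_le_inverse B M var_nonneg
    by (intro add_mono mult_left_mono) auto
  also have "\<dots> = 9 * M * B * var / r" using r_pos by (simp add: field_simps)
  finally show ?thesis .
qed

lemma abs_cov_weighted_weighted_le:
  assumes A: "0 \<le> A" and B: "0 \<le> B"
    and \<phi>: "\<And>y. y \<in> {0..1} \<Longrightarrow> \<bar>\<phi> y\<bar> \<le> A * weight y"
    and \<psi>: "\<And>y. y \<in> {0..1} \<Longrightarrow> \<bar>\<psi> y\<bar> \<le> B * weight y"
  shows "\<bar>cov \<phi> \<psi>\<bar> \<le> 11 * A * B * var"
proof -
  have "\<bar>cov \<phi> \<psi>\<bar> \<le> E (\<lambda>y. A * weight y * (B * weight y)) + E (\<lambda>y. A * weight y) * E (\<lambda>y. B * weight y)"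
    by (rule abs_bernstein_cov_le[OF n_ge1 x_in_unit]) (auto intro: \<phi> \<psi>)
  also have "\<dots> = (A * B) * E (\<lambda>y. weight y * weight y) + (A * B) * (E weight)^2"
    by (simp add: bernstein_eq_cmult[of _ "A * B"] bernstein_cmult power2_eq_square)
  also have "\<dots> \<le> (A * B) * (7 * var) + (A * B) * (4 * var)"
    using mean_weight_mult_weight_le mean_weight_sq_le A B by (intro add_mono mult_left_mono) auto
  finally show ?thesis by (simp add: algebra_simps)
qed

lemma abs_cov_quadratic_quadratic_le:
  assumes M: "0 \<le> M" and M': "0 \<le> M'"
    and R: "\<And>y. y \<in> {0..1} \<Longrightarrow> \<bar>R y\<bar> \<le> 2 * M * (y - x)^2"
    and R': "\<And>y. y \<in> {0..1} \<Longrightarrow> \<bar>R' y\<bar> \<le> 2 * M' * (y - x)^2"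
  shows "\<bar>cov R R'\<bar> \<le> 9 * M * M' * var / n"
proof -
  have "\<bar>cov R R'\<bar> \<le> E (\<lambda>y. 2 * M * (y - x)^2 * (2 * M' * (y - x)^2))
      + E (\<lambda>y. 2 * M * (y - x)^2) * E (\<lambda>y. 2 * M' * (y - x)^2)"
    by (rule abs_bernstein_cov_le[OF n_ge1 x_in_unit]) (auto intro: R R')
  also have "\<dots> = (4 * M * M') * E (\<lambda>y. (y - x)^4) + (4 * M * M') * (var * var)"
  proof -
    have "E (\<lambda>y. 2 * M * (y - x)^2 * (2 * M' * (y - x)^2)) = (4 * M * M') * E (\<lambda>y. (y - x)^4)"
      by (rule bernstein_eq_cmult) (simp add: algebra_simps power4_eq_xxxx power2_eq_square)
    then show ?thesis unfolding bernstein_cmult moment2 by simp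
  qed
  also have "\<dots> \<le> (4 * M * M') * (2 * var / n) + (4 * M * M') * (var * (1 / (4 * n)))"
    using moment4_le var_le var_nonneg M M' by (intro add_mono mult_left_mono) auto
  also have "\<dots> = 9 * M * M' * var / n" using n_pos by (simp add: field_simps)
  finally show ?thesis .
qed

lemma abs_cov_dev_quadratic_le:
  assumes "\<bar>p2\<bar> \<le> M" "\<bar>p3\<bar> \<le> M"
    and R: "\<And>y. y \<in> {0..1} \<Longrightarrow> R y = p2 * (y - x)^2 + p3 * (y - x)^3"
  shows "\<bar>cov (\<lambda>y. y - x) R\<bar> \<le> 3 * M * var / n"
proof -
  have "cov (\<lambda>y. y - x) R = E (\<lambda>y. (y - x) * R y)" unfolding bernstein_cov_def moment1 by simp
  also have "\<dots> = E (\<lambda>y. p2 * (y - x)^3 + p3 * (y - x)^4)"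
    by (rule bernstein_cong[OF n_ge1]) (simp add: R algebra_simps eval_nat_numeral)
  also have "\<dots> = p2 * E (\<lambda>y. (y - x)^3) + p3 * E (\<lambda>y. (y - x)^4)"
    by (simp add: bernstein_add bernstein_cmult)
  finally have eq: "cov (\<lambda>y. y - x) R = p2 * E (\<lambda>y. (y - x)^3) + p3 * E (\<lambda>y. (y - x)^4)" .
  have "\<bar>p2 * E (\<lambda>y. (y - x)^3)\<bar> \<le> M * (var / n)"
    unfolding abs_mult using assms abs_moment3_le by (intro mult_mono) auto
  moreover have "\<bar>p3 * E (\<lambda>y. (y - x)^4)\<bar> \<le> M * (2 * var / n)"
    unfolding abs_mult using assms moment4_le moment4_nonneg by (intro mult_mono) auto
  moreover have "M * (var / n) + M * (2 * var / n) = 3 * M * var / n" by (simp add: field_simps)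
  ultimately show ?thesis unfolding eq by (smt (verit) abs_triangle_ineq)
qed

lemma abs_quadratic_cubic_le:
  assumes "\<bar>p2\<bar> \<le> M" "\<bar>p3\<bar> \<le> M" "y \<in> {0..1}"
  shows "\<bar>p2 * (y - x)^2 + p3 * (y - x)^3\<bar> \<le> 2 * M * (y - x)^2"
proof -
  define t where "t = \<bar>y - x\<bar>"
  have t: "0 \<le> t" "t \<le> 1" unfolding t_def using abs_dev_le1[OF assms(3)] by auto
  have "\<bar>p2 * (y - x)^2 + p3 * (y - x)^3\<bar> \<le> \<bar>p2\<bar> * t^2 + \<bar>p3\<bar> * t^3"
    unfolding t_def by (metis abs_mult abs_triangle_ineq power_abs)
  also have "\<dots> \<le> M * t^2 + M * t^2"
    using assms t power_decreasing[of 2 3 t] by (intro add_mono mult_mono) auto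
  finally show ?thesis unfolding t_def by simp
qed

lemma bernstein_cov_expand:
  assumes f: "\<And>y. y \<in> {0..1} \<Longrightarrow> f y = p0 + p1 * (y - x) + R y + \<phi> y"
    and g: "\<And>y. y \<in> {0..1} \<Longrightarrow> g y = q0 + q1 * (y - x) + R' y + \<psi> y"
  shows "E (\<lambda>y. f y * g y) - E f * E g - var * p1 * q1 =
     p1 * cov (\<lambda>y. y - x) R' + q1 * cov (\<lambda>y. y - x) R + p1 * cov (\<lambda>y. y - x) \<psi> + q1 * cov (\<lambda>y. y - x) \<phi>
     + cov R R' + cov R \<psi> + cov R' \<phi> + cov \<phi> \<psi>"
proof -
  define U where "U = (\<lambda>y::real. y - x)"
  have "E (\<lambda>y. f y * g y) - E f * E g
      = cov (\<lambda>y. p0 + p1 * U y + R y + \<phi> y) (\<lambda>y. q0 + q1 * U y + R' y + \<psi> y)"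
    unfolding bernstein_cov_def[symmetric]
    by (rule bernstein_cov_cong[OF n_ge1]) (simp_all add: f g U_def)
  also have "\<dots> = p1 * q1 * cov U U + p1 * cov U R' + p1 * cov U \<psi>
     + q1 * cov R U + cov R R' + cov R \<psi> + q1 * cov \<phi> U + cov \<phi> R' + cov \<phi> \<psi>"
    by (simp add: bernstein_cov_add_left bernstein_cov_add_right bernstein_cov_cmult_left
        bernstein_cov_cmult_right bernstein_cov_const_left bernstein_cov_const_right algebra_simps)
  also have "cov U U = var"
    using moment1 moment2 unfolding bernstein_cov_def U_def by (simp add: power2_eq_square)
  finally show ?thesis
    using bernstein_cov_commute[of n x R U] bernstein_cov_commute[of n x \<phi> U]
      bernstein_cov_commute[of n x \<phi> R']
    unfolding U_def by (simp add: algebra_simps)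
qed

lemma cov_cubic_plus_remainder_le:
  assumes A: "0 \<le> A" and B: "0 \<le> B" and M: "0 \<le> M" and M': "0 \<le> M'"
    and p1N: "\<bar>p1\<bar> \<le> N" and p1: "\<bar>p1\<bar> \<le> M" and p2: "\<bar>p2\<bar> \<le> M" and p3: "\<bar>p3\<bar> \<le> M"
    and q1N: "\<bar>q1\<bar> \<le> N'" and q1: "\<bar>q1\<bar> \<le> M'" and q2: "\<bar>q2\<bar> \<le> M'" and q3: "\<bar>q3\<bar> \<le> M'"
    and \<phi>: "\<And>y. y \<in> {0..1} \<Longrightarrow> \<bar>\<phi> y\<bar> \<le> A * weight y"
    and \<psi>: "\<And>y. y \<in> {0..1} \<Longrightarrow> \<bar>\<psi> y\<bar> \<le> B * weight y"
    and f: "\<And>y. y \<in> {0..1} \<Longrightarrow> f y = p0 + p1 * (y - x) + (p2 * (y - x)^2 + p3 * (y - x)^3) + \<phi> y"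
    and g: "\<And>y. y \<in> {0..1} \<Longrightarrow> g y = q0 + q1 * (y - x) + (q2 * (y - x)^2 + q3 * (y - x)^3) + \<psi> y"
  shows "real n * \<bar>E (\<lambda>y. f y * g y) - E f * E g - x * (1 - x) / n * p1 * q1\<bar>
     \<le> x * (1 - x) * (11 * A * B + 5 * (N * B + N' * A) + 9 * (M * B + M' * A) / r + 15 * M * M' / n)"
proof -
  define U where "U = (\<lambda>y::real. y - x)"
  define R where "R = (\<lambda>y. p2 * (y - x)^2 + p3 * (y - x)^3)"
  define R' where "R' = (\<lambda>y. q2 * (y - x)^2 + q3 * (y - x)^3)"
  note expand = bernstein_cov_expand[OF f g, folded U_def R_def R'_def]
  have R: "\<bar>R y\<bar> \<le> 2 * M * (y - x)^2" and R': "\<bar>R' y\<bar> \<le> 2 * M' * (y - x)^2" if "y \<in> {0..1}" for y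
    unfolding R_def R'_def using abs_quadratic_cubic_le that p2 p3 q2 q3 by auto
  have "\<bar>p1 * cov U R'\<bar> \<le> M * (3 * M' * var / n)"
    unfolding abs_mult U_def using p1 abs_cov_dev_quadratic_le[OF q2 q3, of R'] M
    by (intro mult_mono) (auto simp: R'_def)
  moreover have "\<bar>q1 * cov U R\<bar> \<le> M' * (3 * M * var / n)"
    unfolding abs_mult U_def using q1 abs_cov_dev_quadratic_le[OF p2 p3, of R] M'
    by (intro mult_mono) (auto simp: R_def)
  moreover have "\<bar>p1 * cov U \<psi>\<bar> \<le> N * (5 * B * var)"
    unfolding abs_mult U_def using p1N abs_cov_dev_weighted_le[OF B \<psi>] by (intro mult_mono) auto
  moreover have "\<bar>q1 * cov U \<phi>\<bar> \<le> N' * (5 * A * var)"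
    unfolding abs_mult U_def using q1N abs_cov_dev_weighted_le[OF A \<phi>] by (intro mult_mono) auto
  moreover have "\<bar>cov R R'\<bar> \<le> 9 * M * M' * var / n"
    by (rule abs_cov_quadratic_quadratic_le[OF M M' R R'])
  moreover have "\<bar>cov R \<psi>\<bar> \<le> 9 * M * B * var / r"
    by (rule abs_cov_quadratic_weighted_le[OF B M \<psi> R])
  moreover have "\<bar>cov R' \<phi>\<bar> \<le> 9 * M' * A * var / r"
    by (rule abs_cov_quadratic_weighted_le[OF A M' \<phi> R'])
  moreover have "\<bar>cov \<phi> \<psi>\<bar> \<le> 11 * A * B * var"
    by (rule abs_cov_weighted_weighted_le[OF A B \<phi> \<psi>])
  ultimately have "\<bar>E (\<lambda>y. f y * g y) - E f * E g - var * p1 * q1\<bar>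
      \<le> M * (3 * M' * var / n) + M' * (3 * M * var / n) + N * (5 * B * var) + N' * (5 * A * var)
       + 9 * M * M' * var / n + 9 * M * B * var / r + 9 * M' * A * var / r + 11 * A * B * var"
    using expand unfolding abs_le_iff by linarith
  also have "\<dots> = var * (11 * A * B + 5 * (N * B + N' * A) + 9 * (M * B + M' * A) / r + 15 * M * M' / n)"
    using r_pos n_pos by (simp add: field_simps)
  finally have "real n * \<bar>E (\<lambda>y. f y * g y) - E f * E g - var * p1 * q1\<bar>
      \<le> real n * (var * (11 * A * B + 5 * (N * B + N' * A) + 9 * (M * B + M' * A) / r
        + 15 * M * M' / n))"
    using n_pos by (intro mult_left_mono) auto
  moreover have "real n * var = x * (1 - x)" using n_pos by (simp add: var_def)
  ultimately show ?thesis unfolding mult.assoc[symmetric] by (simp add: var_def)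
qed

end

section \<open>Third differences and Steklov smoothing\<close>

definition fwd_diff3 :: "(real \<Rightarrow> real) \<Rightarrow> real \<Rightarrow> real \<Rightarrow> real" where
  "fwd_diff3 g t y = g (y + 3*t) - 3 * g (y + 2*t) + 3 * g (y + t) - g y"

lemma omega3_set_bdd_above:
  fixes h :: "real \<Rightarrow> real"
  assumes "continuous_on {0..1} h"
  shows "bdd_above {\<bar>h (x + 3*t) - 3 * h (x + 2*t) + 3 * h (x + t) - h x\<bar> | x t.
      0 < t \<and> t \<le> \<delta> \<and> 0 \<le> x \<and> x + 3*t \<le> 1}"
proof -
  obtain B where B: "\<And>y. y \<in> {0..1} \<Longrightarrow> norm (h y) \<le> B"
    using continuous_on_compact_bound[OF compact_Icc assms] by blast
  show ?thesis
  proof (rule bdd_aboveI, safe)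
    fix x t :: real assume "0 < t" "t \<le> \<delta>" "0 \<le> x" "x + 3*t \<le> 1"
    then have "\<bar>h (x + 3*t)\<bar> \<le> B" "\<bar>h (x + 2*t)\<bar> \<le> B" "\<bar>h (x + t)\<bar> \<le> B" "\<bar>h x\<bar> \<le> B"
      using B by auto
    then show "\<bar>h (x + 3*t) - 3 * h (x + 2*t) + 3 * h (x + t) - h x\<bar> \<le> 8 * B" by linarith
  qed
qed

lemma abs_fwd_diff3_le_omega3:
  assumes "continuous_on {0..1} h" "0 < t" "t \<le> \<delta>" "0 \<le> y" "y + 3*t \<le> 1"
  shows "\<bar>fwd_diff3 h t y\<bar> \<le> omega3 h \<delta>"
  unfolding omega3_def fwd_diff3_def
  by (rule cSup_upper[OF _ omega3_set_bdd_above[OF assms(1)]]) (use assms in blast)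

lemma omega3_nonneg:
  assumes "continuous_on {0..1} h" "0 < \<delta>"
  shows "0 \<le> omega3 h \<delta>"
proof -
  define t where "t = min \<delta> (1/3)"
  have "\<bar>fwd_diff3 h t 0\<bar> \<le> omega3 h \<delta>"
    by (rule abs_fwd_diff3_le_omega3[OF assms(1)]) (use assms in \<open>auto simp: t_def\<close>)
  then show ?thesis by linarith
qed

lemma omega3_reflect:
  fixes h :: "real \<Rightarrow> real"
  shows "omega3 (\<lambda>y. h (1 - y)) \<delta> = omega3 h \<delta>"
proof -
  define S where "S g = {\<bar>g (x + 3*t) - 3 * g (x + 2*t) + 3 * g (x + t) - g x\<bar> | x t.
      0 < t \<and> t \<le> \<delta> \<and> 0 \<le> x \<and> x + 3*t \<le> 1}" for g :: "real \<Rightarrow> real"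
  have reflect_subset: "S (\<lambda>y. g (1 - y)) \<subseteq> S g" for g
  proof
    fix v assume "v \<in> S (\<lambda>y. g (1 - y))"
    then obtain x t
      where v: "v = \<bar>g (1 - (x + 3*t)) - 3 * g (1 - (x + 2*t)) + 3 * g (1 - (x + t)) - g (1 - x)\<bar>"
      and c: "0 < t" "t \<le> \<delta>" "0 \<le> x" "x + 3*t \<le> 1" unfolding S_def by blast
    define x' where "x' = 1 - x - 3*t"
    have "v = \<bar>g (x' + 3*t) - 3 * g (x' + 2*t) + 3 * g (x' + t) - g x'\<bar>"
      unfolding v x'_def by (simp add: algebra_simps abs_minus_commute)
    moreover have "0 \<le> x'" "x' + 3*t \<le> 1" using c by (auto simp: x'_def)
    ultimately show "v \<in> S g" unfolding S_def using c by blast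
  qed
  have "S (\<lambda>y. h (1 - y)) = S h" using reflect_subset[of h] reflect_subset[of "\<lambda>y. h (1 - y)"] by simp
  then show ?thesis unfolding omega3_def S_def by simp
qed

definition clamp01 :: "real \<Rightarrow> real" where "clamp01 y = max 0 (min 1 y)"

lemma continuous_clamp01: "continuous_on UNIV clamp01"
  unfolding clamp01_def by (intro continuous_intros)

lemma continuous_on_comp_clamp01:
  assumes "continuous_on {0..1} h"
  shows "continuous_on S (\<lambda>y. h (clamp01 y))"
  by (rule continuous_on_compose2[OF assms continuous_on_subset[OF continuous_clamp01]])
    (auto simp: clamp01_def)

lemma clamp01_id: "y \<in> {0..1} \<Longrightarrow> clamp01 y = y" by (auto simp: clamp01_def)

definition prim :: "(real \<Rightarrow> real) \<Rightarrow> real \<Rightarrow> real" where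
  "prim g y = integral {-2..y} g"

lemma has_real_derivative_prim:
  assumes "continuous_on {-2..3} g" "y \<in> {-2<..<3}"
  shows "(prim g has_real_derivative g y) (at y)"
proof -
  have "(prim g has_real_derivative g y) (at y within {-2..3})"
    unfolding prim_def by (rule integral_has_real_derivative[OF assms(1)]) (use assms(2) in auto)
  moreover have "at y within {-2..3} = at y"
    using assms(2) by (intro at_within_interior) (auto simp: interior_atLeastAtMost_real)
  ultimately show ?thesis by simp
qed

lemma continuous_on_prim:
  assumes "continuous_on {-2..3} g"
  shows "continuous_on {-2..3} (prim g)"
proof -
  have "\<forall>y\<in>{-2..3}. continuous (at y within {-2..3}) (prim g)"
  proof
    fix y :: real assume y: "y \<in> {-2..3}"
    have "(prim g has_real_derivative g y) (at y within {-2..3})"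
      unfolding prim_def by (rule integral_has_real_derivative[OF assms(1) y])
    then show "continuous (at y within {-2..3}) (prim g)" by (rule DERIV_continuous)
  qed
  then show ?thesis by (simp add: continuous_on_eq_continuous_within)
qed

lemma Taylor_3:
  fixes F :: "nat \<Rightarrow> real \<Rightarrow> real"
  assumes D: "\<forall>m t. m < 3 \<and> a \<le> t \<and> t \<le> b \<longrightarrow> DERIV (F m) t :> F (Suc m) t"
    and "a \<le> c" "c \<le> b" "a \<le> z" "z \<le> b" "z \<noteq> c"
  shows "\<exists>t. (if z < c then z < t \<and> t < c else c < t \<and> t < z) \<and>
    F 0 z = F 0 c + F 1 c * (z - c) + F 2 c / 2 * (z - c)^2 + F 3 t / 6 * (z - c)^3"
proof -
  have "\<exists>t. (if z < c then z < t \<and> t < c else c < t \<and> t < z) \<and>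
    F 0 z = (\<Sum>m<3. (F m c / fact m) * (z - c)^m) + (F 3 t / fact 3) * (z - c)^3"
    by (rule Taylor[of 3 F "F 0" a b c z]) (use assms in auto)
  moreover have "(\<Sum>m<3. (F m c / fact m) * (z - c)^m) = F 0 c + F 1 c * (z - c) + F 2 c / 2 * (z - c)^2"
    by (simp add: eval_nat_numeral)
  moreover have "(fact 3 :: real) = 6" by (simp add: eval_nat_numeral)
  ultimately show ?thesis by auto
qed

lemma abs_fwd_diff3_le_Taylor:
  fixes F :: "nat \<Rightarrow> real \<Rightarrow> real"
  assumes r: "0 < r"
    and D: "\<forall>m t. m < 3 \<and> 0 \<le> t \<and> t \<le> 3*r \<longrightarrow> DERIV (F m) t :> F (Suc m) t"
    and B: "\<And>t. 0 \<le> t \<Longrightarrow> t \<le> 3*r \<Longrightarrow> \<bar>F 3 t\<bar> \<le> B"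
  shows "\<bar>F 0 (3*r) - 3 * F 0 (2*r) + 3 * F 0 r - F 0 0\<bar> \<le> 9 * r^3 * B"
proof -
  have "\<exists>t. 0 < t \<and> t < k * r \<and>
      F 0 (k * r) = F 0 0 + F 1 0 * (k * r) + F 2 0 / 2 * (k * r)^2 + F 3 t / 6 * (k * r)^3"
    if "k \<in> {1, 2, 3}" for k
    using Taylor_3[OF D, of 0 "k * r"] that r by auto
  then obtain t1 t2 t3 where t: "0 < t1" "t1 < r" "0 < t2" "t2 < 2 * r" "0 < t3" "t3 < 3 * r"
    and e: "F 0 r = F 0 0 + F 1 0 * r + F 2 0 / 2 * r^2 + F 3 t1 / 6 * r^3"
      "F 0 (2 * r) = F 0 0 + F 1 0 * (2 * r) + F 2 0 / 2 * (2 * r)^2 + F 3 t2 / 6 * (2 * r)^3"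
      "F 0 (3 * r) = F 0 0 + F 1 0 * (3 * r) + F 2 0 / 2 * (3 * r)^2 + F 3 t3 / 6 * (3 * r)^3"
    by (metis insertCI mult_1)
  define D where "D = 27 * F 3 t3 - 24 * F 3 t2 + 3 * F 3 t1"
  have "F 0 (3*r) - 3 * F 0 (2*r) + 3 * F 0 r - F 0 0 = r^3 * D / 6"
    unfolding e D_def by (simp add: algebra_simps power2_eq_square power3_eq_cube)
  then have "\<bar>F 0 (3*r) - 3 * F 0 (2*r) + 3 * F 0 r - F 0 0\<bar> = r^3 * \<bar>D\<bar> / 6"
    using r by (simp only: abs_divide abs_mult) simp
  also have "\<dots> \<le> r^3 * (54 * B) / 6"
    using B[of t1] B[of t2] B[of t3] t r unfolding D_def
    by (intro divide_right_mono mult_left_mono) auto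
  finally show ?thesis by (simp add: algebra_simps)
qed

lemma has_real_derivative_fwd_diff3:
  assumes "\<And>s. s \<in> {y, y + t, y + 2*t, y + 3*t} \<Longrightarrow> (G has_real_derivative G' s) (at s)"
  shows "((\<lambda>y. fwd_diff3 G t y) has_real_derivative fwd_diff3 G' t y) (at y)"
proof -
  have "((\<lambda>y. G (y + c)) has_real_derivative G' (y + c)) (at y)" if "c \<in> {0, t, 2*t, 3*t}" for c
    by (subst DERIV_shift[symmetric]) (rule assms, use that in auto)
  from this[of "3*t"] this[of "2*t"] this[of t] this[of 0] show ?thesis
    unfolding fwd_diff3_def by (intro DERIV_diff DERIV_add DERIV_cmult) auto
qed

lemma DERIV_comp_affine:
  assumes "(G has_real_derivative d) (at (y + c*p))" "D = c * d"
  shows "((\<lambda>p. G (y + c*p)) has_real_derivative D) (at p)"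
proof -
  have "((\<lambda>p. y + c*p) has_real_derivative c) (at p)" by (auto intro!: derivative_eq_intros)
  from DERIV_chain2[OF assms(1) this] show ?thesis using assms(2) by (simp add: mult.commute)
qed

text \<open>With the Steklov mean \<open>S\<^sub>t h y = \<integral>\<^sub>0\<^sup>1\<integral>\<^sub>0\<^sup>1\<integral>\<^sub>0\<^sup>1 h (y + t (s\<^sub>1 + s\<^sub>2 + s\<^sub>3))\<close>, which equals the third
  difference of a triple primitive divided by \<open>t\<^sup>3\<close>, the smoothing is \<open>3 S\<^sub>r - 3 S\<^sub>2\<^sub>r + S\<^sub>3\<^sub>r\<close>. Its third
  derivative is a combination of third differences of \<open>h\<close>, and since \<open>3 - 3 + 1 = 1\<close> its distance to \<open>h\<close> is
  controlled by third differences as well. The function \<open>h\<close> is extended to \<open>[-2, 3]\<close> by constants so that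
  all primitives are taken over one interval.\<close>

locale steklov_smoothing =
  fixes h :: "real \<Rightarrow> real" and \<delta> r :: real
  assumes h_cont: "continuous_on {0..1} h" and r_pos: "0 < r" and r_le_delta: "3*r \<le> \<delta>"
begin

definition "hext y = h (clamp01 y)"
definition "H1 = prim hext"
definition "H2 = prim H1"
definition "H3 = prim H2"
definition "modulus = omega3 h \<delta>"
definition "smooth_op G = (\<lambda>y. 3 * fwd_diff3 G r y / r^3 - 3 * fwd_diff3 G (2*r) y / (2*r)^3
  + fwd_diff3 G (3*r) y / (3*r)^3)"
definition "smoothed (m::nat) = smooth_op ([H3, H2, H1, hext] ! m)"

lemma hext_cont: "continuous_on {-2..3} hext"
  unfolding hext_def by (rule continuous_on_comp_clamp01[OF h_cont])

lemma H1_cont: "continuous_on {-2..3} H1" unfolding H1_def by (rule continuous_on_prim[OF hext_cont])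

lemma H2_cont: "continuous_on {-2..3} H2" unfolding H2_def by (rule continuous_on_prim[OF H1_cont])

lemma H1_deriv: "s \<in> {-2<..<3} \<Longrightarrow> (H1 has_real_derivative hext s) (at s)"
  unfolding H1_def by (rule has_real_derivative_prim[OF hext_cont])

lemma H2_deriv: "s \<in> {-2<..<3} \<Longrightarrow> (H2 has_real_derivative H1 s) (at s)"
  unfolding H2_def by (rule has_real_derivative_prim[OF H1_cont])

lemma H3_deriv: "s \<in> {-2<..<3} \<Longrightarrow> (H3 has_real_derivative H2 s) (at s)"
  unfolding H3_def by (rule has_real_derivative_prim[OF H2_cont])

lemma hext_eq: "y \<in> {0..1} \<Longrightarrow> hext y = h y"
  unfolding hext_def by (simp add: clamp01_id)

lemma modulus_nonneg: "0 \<le> modulus"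
  unfolding modulus_def by (rule omega3_nonneg[OF h_cont]) (use r_pos r_le_delta in auto)

lemma has_real_derivative_smooth_op:
  assumes G: "\<And>s. s \<in> {-2<..<3} \<Longrightarrow> (G has_real_derivative G' s) (at s)"
    and y: "-2 < y" "y + 9*r < 3"
  shows "(smooth_op G has_real_derivative smooth_op G' y) (at y)"
proof -
  have "((\<lambda>y. fwd_diff3 G t y) has_real_derivative fwd_diff3 G' t y) (at y)" if "0 < t" "t \<le> 3*r" for t
    by (rule has_real_derivative_fwd_diff3) (rule G, use that y in auto)
  then show ?thesis unfolding smooth_op_def
    by (intro DERIV_add DERIV_diff DERIV_cdivide DERIV_cmult) (use r_pos in auto)
qed

lemma smoothed_deriv:
  assumes "m < 3" "0 \<le> t" "t \<le> 1 - 9*r"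
  shows "DERIV (smoothed m) t :> smoothed (Suc m) t"
proof -
  have t: "-2 < t" "t + 9*r < 3" using assms by auto
  consider "m = 0" | "m = 1" | "m = 2" using assms(1) by linarith
  then show ?thesis
    using has_real_derivative_smooth_op[OF H3_deriv t] has_real_derivative_smooth_op[OF H2_deriv t]
      has_real_derivative_smooth_op[OF H1_deriv t]
    by cases (simp_all add: smoothed_def numeral_2_eq_2)
qed

lemma abs_fwd_diff3_hext_le:
  assumes "0 \<le> y" "0 < t" "t \<le> 3*r" "y + 3*t \<le> 1"
  shows "\<bar>fwd_diff3 hext t y\<bar> \<le> modulus"
proof -
  have "fwd_diff3 hext t y = fwd_diff3 h t y" unfolding fwd_diff3_def using assms by (simp add: hext_eq)
  then show ?thesis
    unfolding modulus_def using abs_fwd_diff3_le_omega3[OF h_cont] assms r_le_delta by simp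
qed

lemma abs_smoothed3_le:
  assumes "0 \<le> t" "t \<le> 1 - 9*r"
  shows "\<bar>smoothed 3 t\<bar> \<le> 4 * modulus / r^3"
proof -
  have "\<bar>fwd_diff3 hext (k * r) t\<bar> \<le> modulus" if "k \<in> {1, 2, 3}" for k
    by (rule abs_fwd_diff3_hext_le) (use assms r_pos that in auto)
  from this[of 1] this[of 2] this[of 3]
  have "\<bar>3 * fwd_diff3 hext r t - 3/8 * fwd_diff3 hext (2*r) t + 1/27 * fwd_diff3 hext (3*r) t\<bar> / r^3
      \<le> 4 * modulus / r^3"
    using modulus_nonneg r_pos by (intro divide_right_mono) (auto simp: abs_le_iff)
  moreover have "smoothed 3 t
      = (3 * fwd_diff3 hext r t - 3/8 * fwd_diff3 hext (2*r) t + 1/27 * fwd_diff3 hext (3*r) t) / r^3"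
    unfolding smoothed_def smooth_op_def using r_pos by (simp add: field_simps power3_eq_cube)
  ultimately show ?thesis using r_pos by (simp add: abs_divide)
qed

text \<open>As a function of \<open>p\<close>, \<open>err_gen y 0 p\<close> has third difference \<open>r\<^sup>3 (smoothed 0 y - h y)\<close> with step \<open>r\<close> at
  \<open>0\<close>, and its third derivative \<open>err_gen y 3 p\<close> is the third difference of \<open>h\<close> with step \<open>p\<close> at \<open>y\<close>.\<close>

definition "err_gen y (m::nat) p =
  (if m = 0 then 3 * H3 (y + 1*p) - 3/8 * H3 (y + 2*p) + 1/27 * H3 (y + 3*p) - p^3/6 * hext y
   else if m = 1 then 3 * H2 (y + 1*p) - 3/4 * H2 (y + 2*p) + 1/9 * H2 (y + 3*p) - p^2/2 * hext y
   else if m = 2 then 3 * H1 (y + 1*p) - 3/2 * H1 (y + 2*p) + 1/3 * H1 (y + 3*p) - p * hext y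
   else 3 * hext (y + 1*p) - 3 * hext (y + 2*p) + hext (y + 3*p) - hext y)"

lemma err_gen_deriv:
  assumes y: "0 \<le> y" "y + 9*r \<le> 1" and m: "m < 3" and p: "0 \<le> p" "p \<le> 3*r"
  shows "DERIV (err_gen y m) p :> err_gen y (Suc m) p"
proof -
  have pts: "y + c*p \<in> {-2<..<3}" if "0 \<le> c" "c \<le> 3" for c
  proof -
    have "c * p \<le> 3 * (3*r)" using that p by (intro mult_mono) auto
    moreover have "0 \<le> c * p" using that p by simp
    ultimately show ?thesis using y by simp
  qed
  note d1 = DERIV_comp_affine[OF H1_deriv[OF pts]]
    and d2 = DERIV_comp_affine[OF H2_deriv[OF pts]]
    and d3 = DERIV_comp_affine[OF H3_deriv[OF pts]]
  consider "m = 0" | "m = 1" | "m = 2" using m by linarith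
  then show ?thesis
  proof cases
    case 1
    have "((\<lambda>p. 3 * H3 (y + 1*p) - 3/8 * H3 (y + 2*p) + 1/27 * H3 (y + 3*p) - p^3/6 * hext y)
        has_real_derivative
        3 * (1 * H2 (y + 1*p)) - 3/8 * (2 * H2 (y + 2*p)) + 1/27 * (3 * H2 (y + 3*p))
          - (3 * p^2/6) * hext y) (at p)"
      by (intro DERIV_diff DERIV_add DERIV_cmult d3; (auto intro!: derivative_eq_intros)?)
    then show ?thesis using 1 unfolding err_gen_def by (simp add: algebra_simps)
  next
    case 2
    have "((\<lambda>p. 3 * H2 (y + 1*p) - 3/4 * H2 (y + 2*p) + 1/9 * H2 (y + 3*p) - p^2/2 * hext y)
        has_real_derivative
        3 * (1 * H1 (y + 1*p)) - 3/4 * (2 * H1 (y + 2*p)) + 1/9 * (3 * H1 (y + 3*p))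
          - (2 * p/2) * hext y) (at p)"
      by (intro DERIV_diff DERIV_add DERIV_cmult d2; (auto intro!: derivative_eq_intros)?)
    then show ?thesis using 2 unfolding err_gen_def by (simp add: algebra_simps)
  next
    case 3
    have "((\<lambda>p. 3 * H1 (y + 1*p) - 3/2 * H1 (y + 2*p) + 1/3 * H1 (y + 3*p) - p * hext y)
        has_real_derivative
        3 * (1 * hext (y + 1*p)) - 3/2 * (2 * hext (y + 2*p)) + 1/3 * (3 * hext (y + 3*p))
          - 1 * hext y) (at p)"
      by (intro DERIV_diff DERIV_add DERIV_cmult d1; (auto intro!: derivative_eq_intros)?)
    then show ?thesis using 3 unfolding err_gen_def by (simp add: algebra_simps)
  qed
qed

lemma abs_err_gen3_le:
  assumes y: "0 \<le> y" "y + 9*r \<le> 1" and p: "0 \<le> p" "p \<le> 3*r"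
  shows "\<bar>err_gen y 3 p\<bar> \<le> modulus"
proof (cases "p = 0")
  case True
  then show ?thesis using modulus_nonneg unfolding err_gen_def by simp
next
  case False
  have "err_gen y 3 p = fwd_diff3 hext p y"
    unfolding err_gen_def fwd_diff3_def by (simp add: algebra_simps)
  then show ?thesis using abs_fwd_diff3_hext_le[of y p] y p False by simp
qed

lemma abs_smoothed_minus_le:
  assumes y: "0 \<le> y" "y \<le> 1 - 9*r"
  shows "\<bar>smoothed 0 y - h y\<bar> \<le> 9 * modulus"
proof -
  have y': "y + 9*r \<le> 1" using y by simp
  have "err_gen y 0 (3*r) - 3 * err_gen y 0 (2*r) + 3 * err_gen y 0 r - err_gen y 0 0
      = r^3 * (smoothed 0 y - h y)"
    unfolding err_gen_def smoothed_def smooth_op_def fwd_diff3_def using r_pos hext_eq[of y] y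
    by (simp add: field_simps power3_eq_cube)
  moreover have "\<bar>err_gen y 0 (3*r) - 3 * err_gen y 0 (2*r) + 3 * err_gen y 0 r - err_gen y 0 0\<bar>
      \<le> 9 * r^3 * modulus"
    by (rule abs_fwd_diff3_le_Taylor[OF r_pos])
      (use err_gen_deriv[OF y(1) y'] abs_err_gen3_le[OF y(1) y'] in auto)
  ultimately have "r^3 * \<bar>smoothed 0 y - h y\<bar> \<le> r^3 * (9 * modulus)"
    using r_pos by (simp add: abs_mult mult_ac)
  then show ?thesis using r_pos by simp
qed

lemma quadratic_Taylor_error:
  assumes x: "0 \<le> x" "x \<le> 1 - 9*r" and y: "0 \<le> y" "y \<le> 1 - 9*r"
  shows "\<bar>h y - (smoothed 0 x + smoothed 1 x * (y - x) + smoothed 2 x / 2 * (y - x)^2)\<bar>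
    \<le> 9 * modulus + 2/3 * modulus / r^3 * \<bar>y - x\<bar>^3"
proof (cases "y = x")
  case True
  then show ?thesis using abs_smoothed_minus_le[OF x] by simp
next
  case False
  obtain t where t: "if y < x then y < t \<and> t < x else x < t \<and> t < y"
    and e: "smoothed 0 y
      = smoothed 0 x + smoothed 1 x * (y - x) + smoothed 2 x / 2 * (y - x)^2
        + smoothed 3 t / 6 * (y - x)^3"
    using Taylor_3[of 0 "1 - 9*r" smoothed x y] smoothed_deriv x y False by auto
  have "0 \<le> t" "t \<le> 1 - 9*r" using t x y by (auto split: if_splits)
  then have "\<bar>smoothed 3 t / 6 * (y - x)^3\<bar> \<le> (4 * modulus / r^3) / 6 * \<bar>y - x\<bar>^3"
    unfolding abs_mult abs_divide power_abs using abs_smoothed3_le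
    by (intro mult_right_mono divide_right_mono) auto
  then show ?thesis using abs_smoothed_minus_le[OF y] e by (simp add: abs_le_iff)
qed

end

section \<open>Quadratic approximation controlled by the third modulus\<close>

lemma abs_quadratic_le_from_quarter_points:
  fixes q :: "real \<Rightarrow> real"
  assumes q: "\<And>y. q y = \<alpha> + \<beta> * y + \<gamma> * y^2"
    and b1: "\<bar>q (1/4)\<bar> \<le> B" and b2: "\<bar>q (1/2)\<bar> \<le> B" and b3: "\<bar>q (3/4)\<bar> \<le> B"
    and y: "0 \<le> y" "y \<le> 1"
  shows "\<bar>q y\<bar> \<le> 9 * B"
proof -
  \<comment> \<open>Lagrange basis for the nodes \<open>1/4, 1/2, 3/4\<close>; each is bounded by \<open>3\<close> on \<open>[0, 1]\<close>.\<close>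
  define L1 where "L1 = 8*y*y - 10*y + 3"
  define L2 where "L2 = -16*y*y + 16*y - 3"
  define L3 where "L3 = 8*y*y - 6*y + 1"
  have id: "q y = q (1/4) * L1 + q (1/2) * L2 + q (3/4) * L3"
    unfolding q L1_def L2_def L3_def by (simp add: power2_eq_square algebra_simps)
  have yy: "y*y \<le> y" using y by (simp add: mult_right_le_one_le)
  have squares: "0 \<le> y*y - 5/4*y + 25/64" "0 \<le> y*y - y + 1/4" "0 \<le> y*y - 3/4*y + 9/64"
    using zero_le_power2[of "y - 5/8"] zero_le_power2[of "y - 1/2"] zero_le_power2[of "y - 3/8"]
    by (simp_all add: power2_eq_square algebra_simps)
  have l1: "\<bar>L1\<bar> \<le> 3" unfolding L1_def using yy squares y by (simp add: abs_le_iff; linarith)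
  have l2: "\<bar>L2\<bar> \<le> 3" unfolding L2_def using yy squares y by (simp add: abs_le_iff; linarith)
  have l3: "\<bar>L3\<bar> \<le> 3" unfolding L3_def using yy squares y by (simp add: abs_le_iff; linarith)
  have "\<bar>q (1/4) * L1\<bar> \<le> B * 3" unfolding abs_mult using b1 l1 by (intro mult_mono) auto
  moreover have "\<bar>q (1/2) * L2\<bar> \<le> B * 3" unfolding abs_mult using b2 l2 by (intro mult_mono) auto
  moreover have "\<bar>q (3/4) * L3\<bar> \<le> B * 3" unfolding abs_mult using b3 l3 by (intro mult_mono) auto
  ultimately show ?thesis unfolding id by (simp add: abs_le_iff; linarith)
qed

lemma abs_le_of_overlapping_quadratic_approx:
  fixes h Q Q' :: "real \<Rightarrow> real"
  assumes q: "\<And>y. Q y - Q' y = \<alpha> + \<beta> * y + \<gamma> * y^2"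
    and Q: "\<And>y. y \<in> {0..3/4} \<Longrightarrow> \<bar>h y - Q y\<bar> \<le> E"
    and Q': "\<And>y. y \<in> {1/4..1} \<Longrightarrow> \<bar>h y - Q' y\<bar> \<le> E"
    and y: "y \<in> {0..1}"
  shows "\<bar>h y - Q y\<bar> \<le> 19 * E"
proof -
  have overlap: "\<bar>Q t - Q' t\<bar> \<le> 2 * E" if "t \<in> {1/4..3/4}" for t
    using Q[of t] Q'[of t] that by (simp add: abs_le_iff; linarith)
  have "\<bar>Q y - Q' y\<bar> \<le> 9 * (2 * E)"
    by (rule abs_quadratic_le_from_quarter_points[where q = "\<lambda>y. Q y - Q' y", OF q])
      (use overlap y in auto)
  moreover have "0 \<le> E" using Q[of 0] by simp
  ultimately show ?thesis
    using Q[of y] Q'[of y] y by (cases "y \<le> 3/4") (auto simp: abs_le_iff)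
qed

lemma le_of_near_or_far_bound:
  fixes e \<omega> P z :: real
  assumes \<omega>: "0 \<le> \<omega>" and P: "\<omega> \<le> P" and z: "0 \<le> z"
    and "e \<le> 9 * \<omega> + 31104 * P * z^3 \<or> (1/4 \<le> z \<and> e \<le> 19 * (9 * \<omega> + 31104 * P))"
  shows "e \<le> 40000000 * \<omega> + 40000000 * (P * z^3)"
proof -
  have Pz: "0 \<le> P * z^3" using P \<omega> z by simp
  show ?thesis
    using assms(4)
  proof
    assume "e \<le> 9 * \<omega> + 31104 * P * z^3"
    then show ?thesis using \<omega> Pz by (simp add: mult.assoc)
  next
    assume far: "1/4 \<le> z \<and> e \<le> 19 * (9 * \<omega> + 31104 * P)"
    then have "(1/4)^3 \<le> z^3" by (intro power_mono) auto
    then have "1 \<le> 64 * z^3" by (simp add: power3_eq_cube)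
    then have "P * 1 \<le> P * (64 * z^3)" using P \<omega> by (intro mult_left_mono) auto
    then show ?thesis using far \<omega> P Pz unfolding distrib_left by linarith
  qed
qed

text \<open>Smooth \<open>h\<close> with step \<open>r = \<delta>/36\<close> and expand around \<open>x\<close>; this is valid on \<open>[0, 3/4]\<close>. The same
  construction for the reflected function, expanded around \<open>1/2\<close>, covers \<open>[1/4, 1]\<close>, and gluing on the
  overlap extends the first approximation to \<open>[0, 1]\<close>, where \<open>|y - x| \<ge> 1/4\<close> pays for the constant.\<close>

lemma quadratic_approx_left_half:
  fixes h :: "real \<Rightarrow> real"
  assumes hc: "continuous_on {0..1} h" and \<delta>: "0 < \<delta>" "\<delta> \<le> 1" and x: "0 \<le> x" "x \<le> 1/2"
  shows "\<exists>c0 c1 c2. \<forall>y\<in>{0..1}. \<bar>h y - (c0 + c1 * (y - x) + c2 * (y - x)^2)\<bar>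
            \<le> 40000000 * omega3 h \<delta> * (1 + \<bar>y - x\<bar>^3 / \<delta>^3)"
proof -
  define r where "r = \<delta> / 36"
  have r: "0 < r" "9*r \<le> 1/4" "3*r \<le> \<delta>" using \<delta> by (auto simp: r_def)
  have hc': "continuous_on {0..1} (\<lambda>y. h (1 - y))"
    by (rule continuous_on_compose2[OF hc]) (auto intro!: continuous_intros)
  interpret F: steklov_smoothing h \<delta> r by unfold_locales (use hc r in auto)
  interpret B: steklov_smoothing "\<lambda>y. h (1 - y)" \<delta> r by unfold_locales (use hc' r in auto)
  define \<omega> where "\<omega> = omega3 h \<delta>"
  define P where "P = \<omega> / \<delta>^3"
  have \<omega>: "0 \<le> \<omega>" using F.modulus_nonneg unfolding F.modulus_def \<omega>_def .
  have P: "\<omega> \<le> P" unfolding P_def using \<omega> \<delta> by (simp add: le_divide_eq mult_left_le power_le_one)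
  have cst: "2/3 * \<omega> / r^3 = 31104 * P"
    unfolding P_def r_def using \<delta> by (simp add: field_simps power3_eq_cube)
  define c0 where "c0 = F.smoothed 0 x"
  define c1 where "c1 = F.smoothed 1 x"
  define c2 where "c2 = F.smoothed 2 x / 2"
  define Q where "Q y = c0 + c1 * (y - x) + c2 * (y - x)^2" for y
  define b0 where "b0 = B.smoothed 0 (1/2)"
  define b1 where "b1 = B.smoothed 1 (1/2)"
  define b2 where "b2 = B.smoothed 2 (1/2) / 2"
  define Q' where "Q' y = b0 + b1 * (1/2 - y) + b2 * (1/2 - y)^2" for y
  have Q: "\<bar>h y - Q y\<bar> \<le> 9 * \<omega> + 31104 * P * \<bar>y - x\<bar>^3" if "y \<in> {0..3/4}" for y
    using F.quadratic_Taylor_error[of x y] x that r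
    unfolding Q_def c0_def c1_def c2_def F.modulus_def \<omega>_def[symmetric] cst by auto
  have Q_const: "\<bar>h y - Q y\<bar> \<le> 9 * \<omega> + 31104 * P" if "y \<in> {0..3/4}" for y
    using Q[OF that] mult_left_le[of "\<bar>y - x\<bar>^3" "31104 * P"] power_le_one[of "\<bar>y - x\<bar>" 3] that x \<omega> P
    by auto
  have Q': "\<bar>h y - Q' y\<bar> \<le> 9 * \<omega> + 31104 * P" if "y \<in> {1/4..1}" for y
    using B.quadratic_Taylor_error[of "1/2" "1 - y"] that r
      mult_left_le[of "\<bar>1 - y - 1/2\<bar>^3" "31104 * P"] power_le_one[of "\<bar>1 - y - 1/2\<bar>" 3] \<omega> P
    unfolding Q'_def b0_def b1_def b2_def B.modulus_def omega3_reflect \<omega>_def[symmetric] cst by auto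
  have glued: "\<bar>h y - Q y\<bar> \<le> 19 * (9 * \<omega> + 31104 * P)" if "y \<in> {0..1}" for y
    by (rule abs_le_of_overlapping_quadratic_approx[OF _ Q_const Q' that,
          where \<alpha> = "c0 - c1 * x + c2 * x^2 - b0 - b1/2 - b2/4" and \<beta> = "c1 - 2 * c2 * x + b1 + b2"
          and \<gamma> = "c2 - b2"])
      (simp add: Q_def Q'_def power2_eq_square algebra_simps)
  have "\<bar>h y - Q y\<bar> \<le> 40000000 * \<omega> + 40000000 * (P * \<bar>y - x\<bar>^3)" if "y \<in> {0..1}" for y
    using Q[of y] glued[OF that] that x
    by (intro le_of_near_or_far_bound[OF \<omega> P abs_ge_zero]) (cases "y \<le> 3/4"; auto)
  then show ?thesis
    unfolding Q_def \<omega>_def[symmetric]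
    by (intro exI[of _ c0] exI[of _ c1] exI[of _ c2]) (simp add: P_def distrib_left mult_ac)
qed

lemma quadratic_approx_omega3:
  fixes h :: "real \<Rightarrow> real"
  assumes hc: "continuous_on {0..1} h" and \<delta>: "0 < \<delta>" "\<delta> \<le> 1" and x: "0 \<le> x" "x \<le> 1"
  shows "\<exists>c0 c1 c2. \<forall>y\<in>{0..1}. \<bar>h y - (c0 + c1 * (y - x) + c2 * (y - x)^2)\<bar>
            \<le> 40000000 * omega3 h \<delta> * (1 + \<bar>y - x\<bar>^3 / \<delta>^3)"
proof (cases "x \<le> 1/2")
  case True then show ?thesis using quadratic_approx_left_half[OF hc \<delta> x(1)] by simp
next
  case False
  have hc': "continuous_on {0..1} (\<lambda>y. h (1 - y))"
    by (rule continuous_on_compose2[OF hc]) (auto intro!: continuous_intros)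
  obtain c0 c1 c2 where c: "\<forall>z\<in>{0..1}. \<bar>h (1 - z) - (c0 + c1 * (z - (1 - x)) + c2 * (z - (1 - x))^2)\<bar>
            \<le> 40000000 * omega3 (\<lambda>y. h (1 - y)) \<delta> * (1 + \<bar>z - (1 - x)\<bar>^3 / \<delta>^3)"
    using quadratic_approx_left_half[OF hc' \<delta>, of "1 - x"] False x by auto
  show ?thesis
  proof (intro exI ballI)
    fix y :: real assume y: "y \<in> {0..1}"
    have "1 - y \<in> {0..1}" using y by auto
    from c[rule_format, OF this] show "\<bar>h y - (c0 + (- c1) * (y - x) + c2 * (y - x)^2)\<bar>
            \<le> 40000000 * omega3 h \<delta> * (1 + \<bar>y - x\<bar>^3 / \<delta>^3)"
      unfolding omega3_reflect by (simp add: algebra_simps power2_eq_square abs_minus_commute)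
  qed
qed

lemma quadratic_approx_omega3_at:
  fixes h :: "real \<Rightarrow> real"
  assumes hc: "continuous_on {0..1} h" and \<delta>: "0 < \<delta>" "\<delta> \<le> 1" and x: "0 \<le> x" "x \<le> 1"
  shows "\<exists>c1 c2. \<forall>y\<in>{0..1}. \<bar>h y - (h x + c1 * (y - x) + c2 * (y - x)^2)\<bar>
            \<le> 80000000 * omega3 h \<delta> * (1 + \<bar>y - x\<bar>^3 / \<delta>^3)"
proof -
  define K where "K = 40000000 * omega3 h \<delta>"
  obtain c0 c1 c2 where c: "\<forall>y\<in>{0..1}. \<bar>h y - (c0 + c1 * (y - x) + c2 * (y - x)^2)\<bar>
      \<le> K * (1 + \<bar>y - x\<bar>^3 / \<delta>^3)"
    using quadratic_approx_omega3[OF hc \<delta> x] unfolding K_def by blast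
  have "\<bar>h x - c0\<bar> \<le> K" using c[rule_format, of x] x by simp
  have "\<bar>h y - (h x + c1 * (y - x) + c2 * (y - x)^2)\<bar> \<le> 2 * K * (1 + \<bar>y - x\<bar>^3 / \<delta>^3)"
    if "y \<in> {0..1}" for y
  proof -
    have "K * 1 \<le> K * (1 + \<bar>y - x\<bar>^3 / \<delta>^3)"
      using omega3_nonneg[OF hc \<delta>(1)] \<delta> unfolding K_def by (intro mult_left_mono) auto
    then show ?thesis using c[rule_format, OF that] \<open>\<bar>h x - c0\<bar> \<le> K\<close> by (simp add: abs_le_iff; linarith)
  qed
  then show ?thesis unfolding K_def by (intro exI[of _ c1] exI[of _ c2]) simp
qed

section \<open>Cubic approximation of \<open>C\<^sup>1\<close> functions\<close>

text \<open>Lagrange interpolation at \<open>0, 1/3, 2/3, 1\<close> expresses each coefficient of a cubic through its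
  values there.\<close>

lemma cubic_coeffs_le_of_values:
  fixes c0 c1 c2 c3 :: real
  assumes P: "\<And>y. y \<in> {0..1} \<Longrightarrow> \<bar>c0 + c1 * y + c2 * y^2 + c3 * y^3\<bar> \<le> M"
  shows "\<bar>c1\<bar> \<le> 20 * M" "\<bar>c2\<bar> \<le> 54 * M" "\<bar>c3\<bar> \<le> 36 * M"
proof -
  define z0 where "z0 = c0"
  define z1 where "z1 = c0 + c1 / 3 + c2 / 9 + c3 / 27"
  define z2 where "z2 = c0 + 2 * c1 / 3 + 4 * c2 / 9 + 8 * c3 / 27"
  define z3 where "z3 = c0 + c1 + c2 + c3"
  have "\<bar>z0\<bar> \<le> M" using P[of 0] by (simp add: z0_def)
  moreover have "\<bar>z1\<bar> \<le> M" using P[of "1/3"] by (simp add: z1_def power2_eq_square power3_eq_cube)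
  moreover have "\<bar>z2\<bar> \<le> M" using P[of "2/3"] by (simp add: z2_def power2_eq_square power3_eq_cube)
  moreover have "\<bar>z3\<bar> \<le> M" using P[of 1] by (simp add: z3_def)
  moreover have "c1 = (-11 * z0 + 18 * z1 - 9 * z2 + 2 * z3) / 2"
    "c2 = 9/2 * (2 * z0 - 5 * z1 + 4 * z2 - z3)" "c3 = 9/2 * (-z0 + 3 * z1 - 3 * z2 + z3)"
    unfolding z0_def z1_def z2_def z3_def by (simp_all add: algebra_simps)
  ultimately show "\<bar>c1\<bar> \<le> 20 * M" "\<bar>c2\<bar> \<le> 54 * M" "\<bar>c3\<bar> \<le> 36 * M"
    by (simp_all add: abs_le_iff; linarith)+
qed

lemma cubic_coeffs_le:
  fixes p0 p1 p2 p3 x :: real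
  assumes x: "0 \<le> x" "x \<le> 1"
    and P: "\<And>y. y \<in> {0..1} \<Longrightarrow> \<bar>p0 + p1 * (y - x) + p2 * (y - x)^2 + p3 * (y - x)^3\<bar> \<le> M"
  shows "\<bar>p1\<bar> \<le> 250 * M" "\<bar>p2\<bar> \<le> 250 * M" "\<bar>p3\<bar> \<le> 250 * M"
proof -
  define c1 where "c1 = p1 - 2 * p2 * x + 3 * p3 * x^2"
  define c2 where "c2 = p2 - 3 * p3 * x"
  have shift: "p0 + p1 * (y - x) + p2 * (y - x)^2 + p3 * (y - x)^3
      = (p0 - p1 * x + p2 * x^2 - p3 * x^3) + c1 * y + c2 * y^2 + p3 * y^3" for y
    unfolding c1_def c2_def by (simp add: algebra_simps power2_eq_square power3_eq_cube)
  have "\<bar>(p0 - p1 * x + p2 * x^2 - p3 * x^3) + c1 * y + c2 * y^2 + p3 * y^3\<bar> \<le> M"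
    if "y \<in> {0..1}" for y
    using P[OF that] by (simp only: shift)
  note bounds = cubic_coeffs_le_of_values[OF this]
  have M: "0 \<le> M" using P[of 0] by simp
  have "\<bar>c2 * x\<bar> \<le> \<bar>c2\<bar>" "\<bar>p3 * x\<bar> \<le> \<bar>p3\<bar>" "\<bar>p3 * x^2\<bar> \<le> \<bar>p3\<bar>"
    using x by (auto simp: abs_mult intro!: mult_left_le power_le_one)
  moreover have "p1 = c1 + 2 * (c2 * x) + 3 * (p3 * x^2)" "p2 = c2 + 3 * (p3 * x)"
    unfolding c1_def c2_def by (simp_all add: algebra_simps power2_eq_square)
  ultimately show "\<bar>p1\<bar> \<le> 250 * M" "\<bar>p2\<bar> \<le> 250 * M" "\<bar>p3\<bar> \<le> 250 * M"
    using bounds M by (simp_all add: abs_le_iff; linarith)+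
qed

lemma abs_le_unorm:
  fixes h :: "real \<Rightarrow> real"
  assumes "continuous_on {0..1} h" "y \<in> {0..1}"
  shows "\<bar>h y\<bar> \<le> unorm h"
proof -
  obtain B where B: "\<And>y. y \<in> {0..1} \<Longrightarrow> norm (h y) \<le> B"
    using continuous_on_compact_bound[OF compact_Icc assms(1)] by blast
  have bd: "bdd_above ((\<lambda>x. \<bar>h x\<bar>) ` {0..1})" using B by (intro bdd_aboveI[of _ B]) auto
  show ?thesis unfolding unorm_def by (rule cSup_upper[OF imageI[OF assms(2)] bd])
qed

lemma unorm_nonneg:
  fixes h :: "real \<Rightarrow> real"
  assumes "continuous_on {0..1} h"
  shows "0 \<le> unorm h"
  using abs_le_unorm[OF assms, of 0] by simp

lemma C1_on_unit_continuous:
  assumes "C1_on_unit f f'"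
  shows "continuous_on {0..1} f"
proof -
  have "\<forall>y\<in>{0..1}. continuous (at y within {0..1}) f"
    using assms unfolding C1_on_unit_def by (auto intro: DERIV_continuous)
  then show ?thesis by (simp add: continuous_on_eq_continuous_within)
qed

lemma n_powr_minus_sixth:
  assumes n: "1 \<le> n"
  shows "0 < real n powr (-1/6)" "real n powr (-1/6) \<le> 1" "(real n powr (-1/6))^3 = 1 / sqrt (real n)"
proof -
  have np: "0 < real n" using n by simp
  show "0 < real n powr (-1/6)" using np by simp
  have g: "1 \<le> real n powr (1/6)" using n by (intro ge_one_powr_ge_zero) auto
  have "real n powr (-1/6) = inverse (real n powr (1/6))" by (simp add: powr_minus[symmetric])
  then show "real n powr (-1/6) \<le> 1" using g by (simp add: inverse_le_1_iff)
  have "(real n powr (-1/6))^3 = real n powr (real 3 * (-1/6))" using np by (simp add: powr_power)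
  also have "real 3 * (-1/6) = - (1/2 :: real)" by simp
  also have "real n powr (- (1/2)) = inverse (real n powr (1/2))" by (rule powr_minus)
  also have "real n powr (1/2) = sqrt (real n)" using np by (intro powr_half_sqrt) auto
  also have "inverse (sqrt (real n)) = 1 / sqrt (real n)" by (rule inverse_eq_divide)
  finally show "(real n powr (-1/6))^3 = 1 / sqrt (real n)" .
qed

lemma abs_sub_cubic_le_of_deriv_approx:
  assumes C1: "C1_on_unit f f'" and x: "x \<in> {0..1}" and y: "y \<in> {0..1}" and K: "0 \<le> K" and s: "0 \<le> s"
    and approx: "\<And>z. z \<in> {0..1} \<Longrightarrow>
      \<bar>f' z - (f' x + c1 * (z - x) + c2 * (z - x)^2)\<bar> \<le> K * (1 + s * \<bar>z - x\<bar>^3)"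
  shows "\<bar>f y - (f x + f' x * (y - x) + c1/2 * (y - x)^2 + c2/3 * (y - x)^3)\<bar>
    \<le> K * (\<bar>y - x\<bar> + s * (y - x)^4)"
proof -
  define \<phi> where "\<phi> z = f z - (f x + f' x * (z - x) + c1/2 * (z - x)^2 + c2/3 * (z - x)^3)" for z
  define S where "S = closed_segment x y"
  have S: "S \<subseteq> {0..1}" "x \<in> S" "y \<in> S" "convex S"
    unfolding S_def using x y by (auto simp: closed_segment_eq_real_ivl split: if_splits)
  have dist_le: "\<bar>z - x\<bar> \<le> \<bar>y - x\<bar>" if "z \<in> S" for z
    using that unfolding S_def by (auto simp: closed_segment_eq_real_ivl split: if_splits)
  have "(\<phi> has_field_derivative (f' z - (f' x + c1 * (z - x) + c2 * (z - x)^2))) (at z within S)"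
    if "z \<in> S" for z
  proof -
    have "(f has_real_derivative f' z) (at z within S)"
      using C1 S(1) that unfolding C1_on_unit_def by (blast intro: DERIV_subset)
    then show ?thesis unfolding \<phi>_def
      by (auto intro!: derivative_eq_intros simp: power2_eq_square field_simps)
  qed
  moreover have "norm (f' z - (f' x + c1 * (z - x) + c2 * (z - x)^2)) \<le> K * (1 + s * \<bar>y - x\<bar>^3)"
    if "z \<in> S" for z
  proof -
    have "\<bar>z - x\<bar>^3 \<le> \<bar>y - x\<bar>^3" using dist_le[OF that] by (intro power_mono) auto
    then have "K * (1 + s * \<bar>z - x\<bar>^3) \<le> K * (1 + s * \<bar>y - x\<bar>^3)"
      using K s by (intro mult_left_mono add_left_mono) auto
    then show ?thesis using approx[of z] that S(1) by auto
  qed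
  ultimately have "norm (\<phi> y - \<phi> x) \<le> K * (1 + s * \<bar>y - x\<bar>^3) * norm (y - x)"
    by (intro field_differentiable_bound[OF S(4) _ _ S(3,2)])
  moreover have "\<bar>y - x\<bar> * \<bar>y - x\<bar>^3 = (y - x)^4"
    by (simp add: power_even_abs power_Suc[symmetric] del: power_Suc)
  ultimately show ?thesis unfolding \<phi>_def by (simp add: algebra_simps)
qed

lemma C1_cubic_approx:
  assumes C1: "C1_on_unit f f'" and n: "1 \<le> n" and x: "x \<in> {0..1}"
  shows "\<exists>p2 p3. \<forall>y\<in>{0..1}. \<bar>f y - (f x + f' x * (y - x) + p2 * (y - x)^2 + p3 * (y - x)^3)\<bar>
           \<le> 80000000 * omega3 f' (real n powr (-1/6)) * (\<bar>y - x\<bar> + sqrt (real n) * (y - x)^4)"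
proof -
  define \<delta> where "\<delta> = real n powr (-1/6)"
  have \<delta>: "0 < \<delta>" "\<delta> \<le> 1" "1 / \<delta>^3 = sqrt (real n)" using n_powr_minus_sixth[OF n] by (auto simp: \<delta>_def)
  have f'c: "continuous_on {0..1} f'" using C1 unfolding C1_on_unit_def by blast
  define K where "K = 80000000 * omega3 f' \<delta>"
  have K: "0 \<le> K" unfolding K_def using omega3_nonneg[OF f'c \<delta>(1)] by simp
  obtain c1 c2 where c: "\<forall>z\<in>{0..1}. \<bar>f' z - (f' x + c1 * (z - x) + c2 * (z - x)^2)\<bar>
      \<le> K * (1 + \<bar>z - x\<bar>^3 / \<delta>^3)"
    using quadratic_approx_omega3_at[OF f'c \<delta>(1,2), of x] x unfolding K_def by auto
  have "\<bar>z - x\<bar>^3 / \<delta>^3 = sqrt (real n) * \<bar>z - x\<bar>^3" for z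
    using \<delta>(3) by (metis mult.commute times_divide_eq_left mult_1)
  then have approx: "\<bar>f' z - (f' x + c1 * (z - x) + c2 * (z - x)^2)\<bar>
      \<le> K * (1 + sqrt (real n) * \<bar>z - x\<bar>^3)"
    if "z \<in> {0..1}" for z
    using c that by simp
  have "\<forall>y\<in>{0..1}. \<bar>f y - (f x + f' x * (y - x) + c1/2 * (y - x)^2 + c2/3 * (y - x)^3)\<bar>
      \<le> K * (\<bar>y - x\<bar> + sqrt (real n) * (y - x)^4)"
    using abs_sub_cubic_le_of_deriv_approx[OF C1 x _ K real_sqrt_ge_zero[OF of_nat_0_le_iff] approx]
    by blast
  then show ?thesis unfolding K_def \<delta>_def by blast
qed

lemma (in bernstein_point) cubic_coeffs_le_of_weighted_remainder:
  assumes A: "0 \<le> A" and N: "\<And>y. y \<in> {0..1} \<Longrightarrow> \<bar>f y\<bar> \<le> N"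
    and rem: "\<And>y. y \<in> {0..1} \<Longrightarrow>
      \<bar>f y - (p0 + p1 * (y - x) + p2 * (y - x)^2 + p3 * (y - x)^3)\<bar> \<le> A * weight y"
  shows "\<bar>p1\<bar> \<le> 250 * (N + 2 * A * r)" "\<bar>p2\<bar> \<le> 250 * (N + 2 * A * r)"
    "\<bar>p3\<bar> \<le> 250 * (N + 2 * A * r)"
proof -
  have "\<bar>p0 + p1 * (y - x) + p2 * (y - x)^2 + p3 * (y - x)^3\<bar> \<le> N + 2 * A * r" if "y \<in> {0..1}" for y
  proof -
    have "A * weight y \<le> A * (2 * r)" using weight_le[OF that] A by (intro mult_left_mono)
    then show ?thesis using N[OF that] rem[OF that] by (simp add: abs_le_iff; linarith)
  qed
  then show "\<bar>p1\<bar> \<le> 250 * (N + 2 * A * r)" "\<bar>p2\<bar> \<le> 250 * (N + 2 * A * r)"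
    "\<bar>p3\<bar> \<le> 250 * (N + 2 * A * r)"
    using cubic_coeffs_le[OF x_ge0 x_le1] by blast+
qed

definition product_constant :: "real \<Rightarrow> real" where
  "product_constant K = 11 * K^2 + 5 * K + 18 * (250 * (1 + 2 * K)) * K + 15 * (250 * (1 + 2 * K))^2"

lemma coeff_bound_div_le_max:
  fixes K \<omega> N r :: real
  assumes K: "0 \<le> K" and r: "0 < r"
  shows "250 * (N + 2 * (K * \<omega>) * r) / r \<le> 250 * (1 + 2 * K) * max (N / r) \<omega>"
proof -
  have "250 * (N + 2 * (K * \<omega>) * r) / r = 250 * (N / r + 2 * K * \<omega>)" using r by (simp add: field_simps)
  also have "\<dots> \<le> 250 * (max (N / r) \<omega> + 2 * K * max (N / r) \<omega>)"
    using K by (intro mult_left_mono add_mono) auto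
  finally show ?thesis by (simp add: algebra_simps)
qed

lemma error_terms_le_product_constant:
  fixes K \<omega> \<omega>' N N' N1 N1' r :: real
  assumes K: "0 \<le> K" and \<omega>: "0 \<le> \<omega>" and \<omega>': "0 \<le> \<omega>'" and N: "0 \<le> N" and N': "0 \<le> N'"
    and N1: "0 \<le> N1" and N1': "0 \<le> N1'" and r: "0 < r"
  defines "A \<equiv> K * \<omega>" and "B \<equiv> K * \<omega>'"
  defines "M \<equiv> 250 * (N + 2 * A * r)" and "M' \<equiv> 250 * (N' + 2 * B * r)"
  shows "11 * A * B + 5 * (N1 * B + N1' * A) + 9 * (M * B + M' * A) / r + 15 * M * M' / (r * r)
    \<le> product_constant K * (\<omega> * \<omega>' + N1 * \<omega>' + N1' * \<omega> + max (N / r) \<omega> * max (N' / r) \<omega>')"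
proof -
  define \<Lambda> where "\<Lambda> = 250 * (1 + 2 * K)"
  define m where "m = max (N / r) \<omega>"
  define m' where "m' = max (N' / r) \<omega>'"
  have L: "0 \<le> \<Lambda>" unfolding \<Lambda>_def using K by simp
  have m: "0 \<le> m" and m': "0 \<le> m'" unfolding m_def m'_def using \<omega> \<omega>' by auto
  have Mr: "M / r \<le> \<Lambda> * m" and M'r: "M' / r \<le> \<Lambda> * m'"
    unfolding M_def M'_def A_def B_def \<Lambda>_def m_def m'_def using coeff_bound_div_le_max[OF K r] by auto
  have "9 * (M * B + M' * A) / r = 9 * K * ((M / r) * \<omega>' + (M' / r) * \<omega>)"
    unfolding A_def B_def using r by (simp add: field_simps)
  also have "\<dots> \<le> 9 * K * ((\<Lambda> * m) * m' + (\<Lambda> * m') * m)"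
    using Mr M'r K \<omega> \<omega>' m m' L unfolding m_def m'_def
    by (intro mult_left_mono add_mono mult_mono) auto
  finally have mixed: "9 * (M * B + M' * A) / r \<le> 18 * \<Lambda> * K * (m * m')" by (simp add: algebra_simps)
  have "15 * M * M' / (r * r) = 15 * ((M / r) * (M' / r))" by simp
  also have "\<dots> \<le> 15 * ((\<Lambda> * m) * (\<Lambda> * m'))"
    using Mr M'r L m m' N N' K \<omega> \<omega>' r
    by (intro mult_left_mono mult_mono) (auto simp: M_def M'_def A_def B_def)
  finally have quadratic: "15 * M * M' / (r * r) \<le> 15 * \<Lambda>^2 * (m * m')"
    by (simp add: power2_eq_square algebra_simps)
  define C where "C = product_constant K"
  define a where "a = \<omega> * \<omega>'"
  define b where "b = N1 * \<omega>' + N1' * \<omega>"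
  have C: "C = 11 * K^2 + 5 * K + (18 * \<Lambda> * K + 15 * \<Lambda>^2)"
    unfolding C_def product_constant_def \<Lambda>_def by simp
  have "0 \<le> 11 * K^2" "0 \<le> 5 * K" "0 \<le> 18 * \<Lambda> * K + 15 * \<Lambda>^2" using K L by auto
  then have "11 * K^2 \<le> C" "5 * K \<le> C" "18 * \<Lambda> * K + 15 * \<Lambda>^2 \<le> C" unfolding C by linarith+
  moreover have "0 \<le> a" "0 \<le> b" "0 \<le> m * m'" unfolding a_def b_def using \<omega> \<omega>' N1 N1' m m' by auto
  ultimately have "11 * K^2 * a \<le> C * a" "5 * K * b \<le> C * b"
    "(18 * \<Lambda> * K + 15 * \<Lambda>^2) * (m * m') \<le> C * (m * m')"
    by (simp_all add: mult_right_mono)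
  moreover have "11 * A * B = 11 * K^2 * a" "5 * (N1 * B + N1' * A) = 5 * K * b"
    unfolding A_def B_def a_def b_def by (simp_all add: power2_eq_square algebra_simps)
  moreover have "product_constant K * (\<omega> * \<omega>' + N1 * \<omega>' + N1' * \<omega> + m * m')
      = C * a + C * b + C * (m * m')"
    unfolding C_def a_def b_def by (simp add: algebra_simps)
  ultimately show ?thesis using mixed quadratic unfolding m_def m'_def by (simp add: algebra_simps)
qed

lemma (in bernstein_point) C1_cubic_decomposition:
  assumes "C1_on_unit f f'"
  obtains p2 p3 where "\<And>y. y \<in> {0..1} \<Longrightarrow>
    \<bar>f y - (f x + f' x * (y - x) + p2 * (y - x)^2 + p3 * (y - x)^3)\<bar>
      \<le> 80000000 * omega3 f' (real n powr (-1/6)) * weight y"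
proof -
  have "\<exists>p2 p3. \<forall>y\<in>{0..1}. \<bar>f y - (f x + f' x * (y - x) + p2 * (y - x)^2 + p3 * (y - x)^3)\<bar>
      \<le> 80000000 * omega3 f' (real n powr (-1/6)) * weight y"
    using C1_cubic_approx[OF assms n_ge1 x_in_unit] unfolding weight_def r_def .
  then show ?thesis using that by blast
qed

lemma bernstein_product_bound:
  assumes Cf: "C1_on_unit f f'" and Cg: "C1_on_unit g g'" and n: "1 \<le> n" and x: "x \<in> {0..1}"
  defines "\<delta> \<equiv> real n powr (-1/6)"
  shows "real n * \<bar>bernstein n (\<lambda>y. f y * g y) x - bernstein n f x * bernstein n g x
            - x * (1 - x) / real n * f' x * g' x\<bar>
    \<le> product_constant 80000000 * x * (1 - x) *
        (omega3 f' \<delta> * omega3 g' \<delta> + unorm f' * omega3 g' \<delta> + unorm g' * omega3 f' \<delta>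
         + max (unorm f / sqrt (real n)) (omega3 f' \<delta>) * max (unorm g / sqrt (real n)) (omega3 g' \<delta>))"
proof -
  interpret bernstein_point n x using n x by unfold_locales auto
  define K :: real where "K = 80000000"
  define A where "A = K * omega3 f' \<delta>"
  define B where "B = K * omega3 g' \<delta>"
  define M where "M = 250 * (unorm f + 2 * A * r)"
  define M' where "M' = 250 * (unorm g + 2 * B * r)"
  have f'c: "continuous_on {0..1} f'" and g'c: "continuous_on {0..1} g'"
    using Cf Cg unfolding C1_on_unit_def by auto
  have fc: "continuous_on {0..1} f" and gc: "continuous_on {0..1} g"
    using C1_on_unit_continuous Cf Cg by auto
  have "0 < \<delta>" using n_powr_minus_sixth[OF n] by (simp add: \<delta>_def)
  then have \<omega>: "0 \<le> omega3 f' \<delta>" "0 \<le> omega3 g' \<delta>" using omega3_nonneg f'c g'c by auto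
  then have A: "0 \<le> A" and B: "0 \<le> B" unfolding A_def B_def K_def by auto
  obtain p2 p3 where f_rem: "\<And>y. y \<in> {0..1} \<Longrightarrow>
      \<bar>f y - (f x + f' x * (y - x) + p2 * (y - x)^2 + p3 * (y - x)^3)\<bar> \<le> A * weight y"
    using C1_cubic_decomposition[OF Cf] unfolding A_def K_def \<delta>_def by blast
  obtain q2 q3 where g_rem: "\<And>y. y \<in> {0..1} \<Longrightarrow>
      \<bar>g y - (g x + g' x * (y - x) + q2 * (y - x)^2 + q3 * (y - x)^3)\<bar> \<le> B * weight y"
    using C1_cubic_decomposition[OF Cg] unfolding B_def K_def \<delta>_def by blast
  note f_coeffs = cubic_coeffs_le_of_weighted_remainder[OF A abs_le_unorm[OF fc] f_rem, folded M_def]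
  note g_coeffs = cubic_coeffs_le_of_weighted_remainder[OF B abs_le_unorm[OF gc] g_rem, folded M'_def]
  have "real n * \<bar>E (\<lambda>y. f y * g y) - E f * E g - x * (1 - x) / n * f' x * g' x\<bar>
     \<le> x * (1 - x) * (11 * A * B + 5 * (unorm f' * B + unorm g' * A) + 9 * (M * B + M' * A) / r
         + 15 * M * M' / n)"
    by (rule cov_cubic_plus_remainder_le[OF A B _ _ abs_le_unorm[OF f'c x_in_unit] f_coeffs
          abs_le_unorm[OF g'c x_in_unit] g_coeffs f_rem g_rem])
      (use f_coeffs g_coeffs in \<open>auto simp: algebra_simps\<close>)
  also have "\<dots> \<le> x * (1 - x) * (product_constant K * (omega3 f' \<delta> * omega3 g' \<delta>
      + unorm f' * omega3 g' \<delta> + unorm g' * omega3 f' \<delta>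
      + max (unorm f / r) (omega3 f' \<delta>) * max (unorm g / r) (omega3 g' \<delta>)))"
    using error_terms_le_product_constant[of K "omega3 f' \<delta>" "omega3 g' \<delta>" "unorm f" "unorm g"
        "unorm f'" "unorm g'" r] unorm_nonneg fc gc f'c g'c \<omega> r_pos x_ge0 x_le1
    unfolding A_def B_def M_def M'_def K_def r_times_r
    by (intro mult_left_mono) auto
  finally show ?thesis unfolding K_def r_def by (simp add: algebra_simps)
qed

theorem theorem2p4:
  shows "\<exists>C>0. \<forall>f f' g g' :: real \<Rightarrow> real. \<forall>n::nat. \<forall>x::real.
    C1_on_unit f f' \<and> C1_on_unit g g' \<and> n \<ge> 1 \<and> x \<in> {0..1} \<longrightarrow>
    (let d = real n powr (-1/6) in
     real n * \<bar>bernstein n (\<lambda>y. f y * g y) x - bernstein n f x * bernstein n g x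
                 - x * (1 - x) / real n * f' x * g' x\<bar>
     \<le> C * x * (1 - x) *
        (omega3 f' d * omega3 g' d
         + unorm f' * omega3 g' d + unorm g' * omega3 f' d
         + max (unorm f / sqrt (real n)) (omega3 f' d)
           * max (unorm g / sqrt (real n)) (omega3 g' d)))"
proof (intro exI conjI allI impI)
  show "0 < product_constant 80000000" by (simp add: product_constant_def)
qed (unfold Let_def, elim conjE, rule bernstein_product_bound; assumption)

end
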